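(* Let $\Omega\subset\mathbb{R}^n$, $n\in\mathbb{N}$, be a bounded smooth domain. Let $\alpha\ge0$, $\kappa\ge0$, $T\in(0,\infty]$, and let the nonnegative functions $u,v\in C^0(\overline\Omega\times[0,T))\cap C^{2,1}(\overline\Omega\times(0,T))$ solve \[ u_t=\Delta u-\nabla\cdot\Big(\frac{u}{(1+u)^\alpha}\nabla v\Big)-uw+\kappa-u,\qquad v_t=\Delta v+uw-v\qquad\text{in }\Omega\times(0,T), \] with $\partial_\nu u=\partial_\nu v=\partial_\nu w=0$ on $\partial\Omega\times(0,T)$, for some function $w$. Then \[ \int_\Omega u(\cdot,t)+\int_\Omega v(\cdot,t)=e^{-t}\Big(\int_\Omega u(\cdot,0)+\int_\Omega v(\cdot,0)\Big)+\kappa|\Omega|(1-e^{-t})\qquad\text{for all }t\in(0,T). \]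
   Context: $\nu$ denotes the outward unit normal on $\partial\Omega$, $\partial_\nu=\nu\cdot\nabla$, and $|\Omega|$ is the Lebesgue measure of $\Omega$. *)

theory Defs
  imports "HOL-Analysis.Analysis"
begin

text \<open>Space variable: x :: real^'n (Euclidean n-space, n = CARD('n) \<ge> 1).
  Time: real.  Functions of (x,t) are curried: u :: real^'n \<Rightarrow> real \<Rightarrow> real.\<close>

fun Ck :: "nat \<Rightarrow> (real^'n \<Rightarrow> real) \<Rightarrow> bool" where
  "Ck 0 f = continuous_on UNIV f"
| "Ck (Suc k) f = (\<exists>f'. (\<forall>x. (f has_derivative f' x) (at x)) \<and>
                          (\<forall>i. Ck k (\<lambda>x. f' x (axis i 1))))"

definition smooth_fun :: "(real^'n \<Rightarrow> real) \<Rightarrow> bool" where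
  "smooth_fun f \<longleftrightarrow> (\<forall>k. Ck k f)"

definition grad :: "(real^'n \<Rightarrow> real) \<Rightarrow> real^'n \<Rightarrow> real^'n" where
  "grad f x = (\<chi> i. frechet_derivative f (at x) (axis i 1))"

definition diverg :: "(real^'n \<Rightarrow> real^'n) \<Rightarrow> real^'n \<Rightarrow> real" where
  "diverg F x = (\<Sum>i\<in>UNIV. frechet_derivative (\<lambda>y. F y $ i) (at x) (axis i 1))"

definition lapl :: "(real^'n \<Rightarrow> real) \<Rightarrow> real^'n \<Rightarrow> real" where
  "lapl f x = diverg (grad f) x"

definition defining_fun :: "(real^'n) set \<Rightarrow> (real^'n \<Rightarrow> real) \<Rightarrow> bool" where
  "defining_fun \<Omega> \<rho> \<longleftrightarrow> smooth_fun \<rho> \<and> \<Omega> = {x. \<rho> x < 0} \<and>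
      (\<forall>x. \<rho> x = 0 \<longrightarrow> grad \<rho> x \<noteq> 0)"

text \<open>Bounded smooth domain: bounded, open, connected, with C^\<infinity> boundary
  (expressed through a global smooth defining function).\<close>
definition bounded_smooth_domain :: "(real^'n) set \<Rightarrow> bool" where
  "bounded_smooth_domain \<Omega> \<longleftrightarrow> \<Omega> \<noteq> {} \<and> open \<Omega> \<and> connected \<Omega> \<and> bounded \<Omega> \<and>
      (\<exists>\<rho>. defining_fun \<Omega> \<rho>)"

text \<open>Outward unit normal at a boundary point (independent of the chosen defining function).\<close>
definition outward_normal :: "(real^'n) set \<Rightarrow> real^'n \<Rightarrow> real^'n" where
  "outward_normal \<Omega> x = (SOME \<nu>. \<exists>\<rho>. defining_fun \<Omega> \<rho> \<and> \<nu> = (1 / norm (grad \<rho> x)) *\<^sub>R grad \<rho> x)"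

definition neumann_zero_at :: "(real^'n) set \<Rightarrow> (real^'n \<Rightarrow> real) \<Rightarrow> real^'n \<Rightarrow> bool" where
  "neumann_zero_at \<Omega> f x \<longleftrightarrow>
     (\<exists>D. (f has_derivative D) (at x within closure \<Omega>) \<and> D (outward_normal \<Omega> x) = 0)"

definition time_open :: "ereal \<Rightarrow> real set" where
  "time_open T = {t. 0 < t \<and> ereal t < T}"

definition time_closed0 :: "ereal \<Rightarrow> real set" where
  "time_closed0 T = {t. 0 \<le> t \<and> ereal t < T}"

definition C0_space :: "(real^'n) set \<Rightarrow> ereal \<Rightarrow> (real^'n \<Rightarrow> real \<Rightarrow> real) \<Rightarrow> bool" where
  "C0_space \<Omega> T u \<longleftrightarrow> continuous_on (closure \<Omega> \<times> time_closed0 T) (\<lambda>(x,t). u x t)"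

definition C21_space :: "(real^'n) set \<Rightarrow> ereal \<Rightarrow> (real^'n \<Rightarrow> real \<Rightarrow> real) \<Rightarrow> bool" where
  "C21_space \<Omega> T u \<longleftrightarrow>
    (\<exists>ut gu hu.
       (\<forall>x\<in>closure \<Omega>. \<forall>t\<in>time_open T.
          ((\<lambda>s. u x s) has_real_derivative ut x t) (at t) \<and>
          ((\<lambda>y. u y t) has_derivative (\<lambda>h. gu x t \<bullet> h)) (at x within closure \<Omega>) \<and>
          ((\<lambda>y. gu y t) has_derivative (\<lambda>h. hu x t *v h)) (at x within closure \<Omega>)) \<and>
       continuous_on (closure \<Omega> \<times> time_open T) (\<lambda>(x,t). ut x t) \<and>
       continuous_on (closure \<Omega> \<times> time_open T) (\<lambda>(x,t). gu x t) \<and>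
       continuous_on (closure \<Omega> \<times> time_open T) (\<lambda>(x,t). hu x t))"

end

theory Submission
  imports Defs
begin

text \<open>Adding the two equations, the cross terms $\pm uw$ cancel and the total density obeys
  $\partial_t(u+v) = \nabla\cdot F + \kappa - (u+v)$ with the flux
  $F = \nabla u + \nabla v - \frac{u}{(1+u)^\alpha}\nabla v$, which is tangent to the boundary
  by the Neumann conditions. The divergence theorem makes $\int_\Omega \nabla\cdot F$ vanish, so the
  mass $y(t) = \int_\Omega u + \int_\Omega v$ solves $y' = \kappa|\Omega| - y$, whose solution is the
  stated formula. The divergence theorem is proved from scratch for a domain
  $\Omega = \{\rho < 0\}$: the field $\mathrm{cutoff}(\rho/\varepsilon) F$ is compactly supported in
  $\Omega$, so its divergence integrates to zero, and the boundary-layer term disappears as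
  $\varepsilon \to 0$ because $F\cdot\nabla\rho$ vanishes on $\partial\Omega$.\<close>

section \<open>A $C^1$ cutoff function\<close>

definition cutoff :: "real \<Rightarrow> real" where
  "cutoff s = (if s \<le> -2 then 1 else if s \<ge> -1 then 0 else 1 - (3*(s+2)^2 - 2*(s+2)^3))"

definition cutoff_deriv :: "real \<Rightarrow> real" where
  "cutoff_deriv s = (if s \<le> -2 then 0 else if s \<ge> -1 then 0 else -(6*(s+2) - 6*(s+2)^2))"

lemma cutoff_eq_1: "s \<le> -2 \<Longrightarrow> cutoff s = 1"
  by (simp add: cutoff_def)

lemma cutoff_eq_0: "s \<ge> -1 \<Longrightarrow> cutoff s = 0"
  by (simp add: cutoff_def)

lemma cutoff_deriv_eq_0: "s \<ge> -1 \<or> s \<le> -2 \<Longrightarrow> cutoff_deriv s = 0"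
  by (auto simp: cutoff_deriv_def)

lemma has_real_derivative_from_both_sides:
  fixes f :: "real \<Rightarrow> real"
  assumes "(f has_real_derivative D) (at x within {..x})"
      and "(f has_real_derivative D) (at x within {x..})"
  shows "(f has_real_derivative D) (at x)"
proof -
  have "((\<lambda>y. (f y - f x) / (y - x)) \<longlongrightarrow> D) (at x within ({..x} \<union> {x..}))"
    using assms by (simp add: Lim_within_Un has_field_derivative_iff)
  moreover have "{..x} \<union> {x..} = (UNIV::real set)" by auto
  ultimately show ?thesis by (simp add: has_field_derivative_iff)
qed

lemma cutoff_has_real_derivative: "(cutoff has_real_derivative cutoff_deriv s) (at s)"
proof -
  let ?p = "\<lambda>s::real. 1 - (3*(s+2)^2 - 2*(s+2)^3)" and ?p' = "\<lambda>s::real. -(6*(s+2) - 6*(s+2)^2)"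
  have p: "(?p has_real_derivative ?p' s) (at s within S)" for S
    by (auto intro!: derivative_eq_intros simp: algebra_simps power2_eq_square)
  have on_open: "(cutoff has_real_derivative cutoff_deriv s) (at s)"
    if "open S" "s \<in> S" "(g has_real_derivative cutoff_deriv s) (at s within S)"
       "\<And>x. x \<in> S \<Longrightarrow> cutoff x = g x" for S g
    using that by (metis at_within_open has_field_derivative_transform_within_open)
  consider "s < -2" | "s = -2" | "-2 < s \<and> s < -1" | "s = -1" | "s > -1" by linarith
  then show ?thesis
  proof cases
    case 1
    then show ?thesis
      by (intro on_open[of "{..< -2}" "\<lambda>_. 1"]) (auto simp: cutoff_def cutoff_deriv_def)
  next
    case 3
    then show ?thesis
      by (intro on_open[of "{-2<..<-1}" ?p] p[THEN DERIV_cong]) (auto simp: cutoff_def cutoff_deriv_def)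
  next
    case 5
    then show ?thesis
      by (intro on_open[of "{-1<..}" "\<lambda>_. 0"]) (auto simp: cutoff_def cutoff_deriv_def)
  next
    case 2
    have "(cutoff has_real_derivative 0) (at s within {..s})"
      by (rule has_field_derivative_transform_within[OF DERIV_const[of 1], where d=1])
         (use 2 in \<open>auto simp: cutoff_def\<close>)
    moreover have "(cutoff has_real_derivative ?p' s) (at s within {s..})"
      using 2 by (intro has_field_derivative_transform_within[OF p, where d="1/2" and g=cutoff])
        (auto simp: cutoff_def dist_real_def)
    ultimately show ?thesis using 2 has_real_derivative_from_both_sides by (simp add: cutoff_deriv_def)
  next
    case 4
    have "(cutoff has_real_derivative ?p' s) (at s within {..s})"
      using 4 by (intro has_field_derivative_transform_within[OF p, where d="1/2" and g=cutoff])
        (auto simp: cutoff_def dist_real_def)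
    moreover have "(cutoff has_real_derivative 0) (at s within {s..})"
      by (rule has_field_derivative_transform_within[OF DERIV_const[of 0], where d=1])
         (use 4 in \<open>auto simp: cutoff_def\<close>)
    ultimately show ?thesis using 4 has_real_derivative_from_both_sides by (simp add: cutoff_deriv_def)
  qed
qed

lemma continuous_on_cutoff: "continuous_on UNIV cutoff"
  using cutoff_has_real_derivative by (meson DERIV_isCont continuous_at_imp_continuous_on)

lemma continuous_on_cutoff_deriv: "continuous_on UNIV cutoff_deriv"
proof -
  have "continuous_on ({..-2} \<union> {-2..-1} \<union> {-1..}) cutoff_deriv"
  proof (intro continuous_on_closed_Un)
    show "continuous_on {..-2} cutoff_deriv" "continuous_on {-1..} cutoff_deriv"
      by (rule continuous_on_eq[of _ "\<lambda>_. 0"]; auto simp: cutoff_deriv_def)+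
    show "continuous_on {-2..-1} cutoff_deriv"
      by (rule continuous_on_eq[of _ "\<lambda>s. -(6*(s+2) - 6*(s+2)^2)"])
         (auto simp: cutoff_deriv_def intro!: continuous_intros)
  qed auto
  moreover have "{..-2} \<union> {-2..-1} \<union> {-1..} = (UNIV::real set)" by auto
  ultimately show ?thesis by simp
qed

lemma abs_cutoff_deriv_le: "\<bar>cutoff_deriv s\<bar> \<le> 2"
proof -
  have "0 \<le> 6*r - 6*r^2 \<and> 6*r - 6*r^2 \<le> 2" if "0 \<le> r" "r \<le> 1" for r :: real
  proof
    show "0 \<le> 6*r - 6*r^2" using that by (simp add: power2_eq_square mult_left_le)
    have "0 \<le> (r - 1/2)^2" by simp
    then show "6*r - 6*r^2 \<le> 2" by (simp add: power2_eq_square algebra_simps)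
  qed
  from this[of "s+2"] show ?thesis by (auto simp: cutoff_deriv_def)
qed

lemma cutoff_bounds: "0 \<le> cutoff s \<and> cutoff s \<le> 1"
proof -
  have "0 \<le> 3*r^2 - 2*r^3 \<and> 3*r^2 - 2*r^3 \<le> 1" if "0 \<le> r" "r \<le> 1" for r :: real
  proof
    have "3*r^2 - 2*r^3 = r^2 * (3 - 2*r)" by (simp add: algebra_simps power2_eq_square power3_eq_cube)
    thus "0 \<le> 3*r^2 - 2*r^3" using that by simp
    have "1 - (3*r^2 - 2*r^3) = (1 - r)^2 * (1 + 2*r)"
      by (simp add: algebra_simps power2_eq_square power3_eq_cube)
    moreover have "(1 - r)^2 * (1 + 2*r) \<ge> 0" using that by simp
    ultimately show "3*r^2 - 2*r^3 \<le> 1" by linarith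
  qed
  from this[of "s+2"] show ?thesis by (auto simp: cutoff_def)
qed

lemma abs_cutoff_deriv_layer_le:
  fixes r g C \<epsilon> \<eta> :: real
  assumes \<epsilon>: "\<epsilon> > 0" "2 * \<epsilon> \<le> \<eta>" and r: "r < 0" and C: "C \<ge> 0"
    and g: "r > -\<eta> \<Longrightarrow> \<bar>g\<bar> \<le> C * \<bar>r\<bar>"
  shows "\<bar>cutoff_deriv (r / \<epsilon>) / \<epsilon> * g\<bar> \<le> 4 * C"
proof (cases "cutoff_deriv (r / \<epsilon>) = 0")
  case False
  then have "\<not> (r / \<epsilon> \<ge> -1 \<or> r / \<epsilon> \<le> -2)" using cutoff_deriv_eq_0 by blast
  then have r2: "r > -2 * \<epsilon>" using \<epsilon> by (simp add: field_simps)
  then have "\<bar>g\<bar> \<le> C * \<bar>r\<bar>" using \<epsilon> g by simp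
  also have "\<dots> \<le> C * (2 * \<epsilon>)" using r2 r C by (intro mult_left_mono) auto
  finally have "\<bar>cutoff_deriv (r / \<epsilon>)\<bar> * \<bar>g\<bar> \<le> 2 * (C * (2 * \<epsilon>))"
    using abs_cutoff_deriv_le[of "r / \<epsilon>"] by (intro mult_mono) auto
  then show ?thesis using \<epsilon> by (simp add: abs_mult field_simps)
qed (use C in simp)

section \<open>Differential calculus in $\real^n$\<close>

lemma has_real_derivative_along_line:
  fixes G :: "'a::real_normed_vector \<Rightarrow> real"
  assumes "(G has_derivative D) (at (x + s *\<^sub>R e))"
  shows "((\<lambda>s. G (x + s *\<^sub>R e)) has_real_derivative D e) (at s)"
proof -
  have "((\<lambda>s. x + s *\<^sub>R e) has_derivative (\<lambda>t. t *\<^sub>R e)) (at s)"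
    by (auto intro!: derivative_eq_intros)
  from has_derivative_compose[OF this assms] have "((\<lambda>s. G (x + s *\<^sub>R e)) has_derivative (\<lambda>t. D (t *\<^sub>R e))) (at s)" .
  moreover have "linear D" using assms has_derivative_linear by blast
  ultimately show ?thesis
    by (simp add: has_field_derivative_def linear_scale mult.commute[of _ "D e"])
qed

lemma has_derivative_decreasing_direction:
  fixes f :: "'a::real_normed_vector \<Rightarrow> real"
  assumes "(f has_derivative D) (at x)" "D v < 0"
  shows "\<exists>d>0. \<forall>s. 0 < s \<and> s < d \<longrightarrow> f (x + s *\<^sub>R v) < f x"
  using DERIV_neg_dec_right[OF has_real_derivative_along_line[of f D x 0 v]] assms by auto

lemma has_derivative_increasing_direction:
  fixes f :: "'a::real_normed_vector \<Rightarrow> real"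
  assumes "(f has_derivative D) (at x)" "D v > 0"
  shows "\<exists>d>0. \<forall>s. 0 < s \<and> s < d \<longrightarrow> f (x + s *\<^sub>R v) > f x"
  using DERIV_pos_inc_right[OF has_real_derivative_along_line[of f D x 0 v]] assms by auto

lemma has_derivative_within_unique_direction:
  fixes F :: "'a::real_normed_vector \<Rightarrow> real"
  assumes D1: "(F has_derivative D1) (at y within S)" and D2: "(F has_derivative D2) (at y within S)"
    and d: "d > 0" and seg: "\<And>s. 0 \<le> s \<Longrightarrow> s \<le> d \<Longrightarrow> y + s *\<^sub>R w \<in> S"
  shows "D1 w = D2 w"
proof -
  let ?p = "\<lambda>s::real. y + s *\<^sub>R w"
  have p: "(?p has_derivative (\<lambda>s. s *\<^sub>R w)) (at 0 within {0..d})"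
    by (auto intro!: derivative_eq_intros)
  have img: "?p ` {0..d} \<subseteq> S" using seg by auto
  have along: "((F \<circ> ?p) has_vector_derivative D w) (at 0 within {0..d})"
    if D: "(F has_derivative D) (at y within S)" for D
  proof -
    have "((F \<circ> ?p) has_derivative (D \<circ> (\<lambda>s. s *\<^sub>R w))) (at 0 within {0..d})"
      using diff_chain_within[OF p, of F D] has_derivative_subset[OF D img] by simp
    moreover have "D \<circ> (\<lambda>s. s *\<^sub>R w) = (\<lambda>s. s *\<^sub>R D w)"
      using has_derivative_linear[OF D] by (auto simp: linear_scale)
    ultimately show ?thesis by (simp add: has_vector_derivative_def)
  qed
  have "at (0::real) within {0..d} \<noteq> bot" using d by (simp add: at_within_Icc_at_right)
  then show ?thesis by (rule vector_derivative_unique_within[OF _ along[OF D1] along[OF D2]])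
qed

lemma linear_eq_sum_axis:
  fixes f :: "real^'n \<Rightarrow> 'b::real_vector"
  assumes "linear f"
  shows "f h = (\<Sum>i\<in>UNIV. h$i *\<^sub>R f (axis i 1))"
proof -
  have "h = (\<Sum>i\<in>UNIV. h$i *\<^sub>R axis i (1::real))"
    using basis_expansion[of h] by (simp add: scalar_mult_eq_scaleR)
  then have "f h = f (\<Sum>i\<in>UNIV. h$i *\<^sub>R axis i (1::real))" by simp
  also have "\<dots> = (\<Sum>i\<in>UNIV. h$i *\<^sub>R f (axis i 1))"
    using assms by (simp add: linear_sum linear_scale)
  finally show ?thesis .
qed

lemma linear_eq_inner_axis:
  fixes D :: "real^'n \<Rightarrow> real"
  assumes "linear D"
  shows "D h = (\<chi> i. D (axis i 1)) \<bullet> h"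
  using linear_eq_sum_axis[OF assms, of h] by (simp add: inner_vec_def mult.commute)

lemma norm_linear_le_sum_axis:
  fixes f :: "real^'n \<Rightarrow> 'b::real_normed_vector"
  assumes "linear f"
  shows "norm (f h) \<le> (\<Sum>i\<in>UNIV. norm (f (axis i 1))) * norm h"
proof -
  have "norm (f h) \<le> (\<Sum>i\<in>UNIV. norm (h$i *\<^sub>R f (axis i 1)))"
    using linear_eq_sum_axis[OF assms, of h] norm_sum by metis
  also have "\<dots> \<le> (\<Sum>i\<in>UNIV. norm (f (axis i 1)) * norm h)"
    by (intro sum_mono) (simp add: mult.commute[of _ "norm h"] mult_right_mono component_le_norm_cart)
  also have "\<dots> = (\<Sum>i\<in>UNIV. norm (f (axis i 1))) * norm h" by (simp add: sum_distrib_right)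
  finally show ?thesis .
qed

lemma compact_continuous_norm_bound:
  fixes g :: "'a::metric_space \<Rightarrow> 'b::real_normed_vector"
  assumes "continuous_on K g" "compact K"
  obtains M where "M \<ge> 0" "\<And>x. x \<in> K \<Longrightarrow> norm (g x) \<le> M"
proof -
  have "bounded (g ` K)" using compact_continuous_image[OF assms] compact_imp_bounded by blast
  then obtain M where "\<forall>x\<in>K. norm (g x) \<le> M" by (auto simp: bounded_iff)
  then show ?thesis by (intro that[of "max M 0"]) auto
qed

lemma compact_linear_family_norm_bound:
  fixes f :: "real^'n \<Rightarrow> real^'n \<Rightarrow> 'b::real_normed_vector"
  assumes lin: "\<And>x. x \<in> K \<Longrightarrow> linear (f x)" and cont: "\<And>j. continuous_on K (\<lambda>x. f x (axis j 1))"
    and K: "compact K"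
  obtains M where "M \<ge> 0" "\<And>x h. x \<in> K \<Longrightarrow> norm (f x h) \<le> M * norm h"
proof -
  have "continuous_on K (\<lambda>x. \<Sum>j\<in>UNIV. norm (f x (axis j 1)))"
    by (intro continuous_intros cont)
  then obtain M where M: "M \<ge> 0" "\<And>x. x \<in> K \<Longrightarrow> norm (\<Sum>j\<in>UNIV. norm (f x (axis j 1))) \<le> M"
    using compact_continuous_norm_bound[OF _ K] by blast
  have "norm (f x h) \<le> M * norm h" if x: "x \<in> K" for x h
  proof -
    have "norm (f x h) \<le> (\<Sum>j\<in>UNIV. norm (f x (axis j 1))) * norm h"
      by (rule norm_linear_le_sum_axis[OF lin[OF x]])
    also have "\<dots> \<le> M * norm h" using M(2)[OF x] by (intro mult_right_mono) auto
    finally show ?thesis .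
  qed
  with M(1) show ?thesis by (rule that)
qed

lemma has_derivative_vec_lambda:
  fixes f :: "'a::real_normed_vector \<Rightarrow> real^'n"
  assumes "\<And>i. ((\<lambda>x. f x $ i) has_derivative (\<lambda>h. f' h $ i)) (at a within S)"
  shows "(f has_derivative f') (at a within S)"
  using assms by (auto simp: has_derivative_componentwise_within[of f f'] Basis_vec_def inner_axis)

lemma has_derivative_vec_nth:
  fixes f :: "'a::real_normed_vector \<Rightarrow> real^'n"
  assumes "(f has_derivative f') F"
  shows "((\<lambda>x. f x $ i) has_derivative (\<lambda>h. f' h $ i)) F"
  using bounded_linear.has_derivative[OF bounded_linear_vec_nth assms] .

lemma grad_eqI:
  assumes "(f has_derivative (\<lambda>h. g \<bullet> h)) (at x)"
  shows "grad f x = g"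
  using frechet_derivative_at[OF assms, symmetric] by (simp add: grad_def inner_axis vec_eq_iff)

lemma diverg_eqI:
  fixes F :: "real^'n \<Rightarrow> real^'n"
  assumes "(F has_derivative DF) (at x)"
  shows "diverg F x = (\<Sum>i\<in>UNIV. DF (axis i 1) $ i)"
  using frechet_derivative_at[OF has_derivative_vec_nth[OF assms], symmetric] by (simp add: diverg_def)

lemma Ck_2_grad:
  assumes "Ck 2 f"
  obtains DN where "\<And>x. (f has_derivative (\<lambda>h. grad f x \<bullet> h)) (at x)"
    and "continuous_on UNIV (grad f)"
    and "\<And>x. (grad f has_derivative DN x) (at x)" and "\<And>j. continuous_on UNIV (\<lambda>x. DN x (axis j 1))"
proof -
  have "Ck (Suc (Suc 0)) f" using assms by (simp add: numeral_2_eq_2)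
  then obtain f' where f'1: "\<And>x. (f has_derivative f' x) (at x)"
    and f'2: "\<And>i. Ck (Suc 0) (\<lambda>x. f' x (axis i 1))"
    by auto
  have "\<forall>i. \<exists>g. (\<forall>x. ((\<lambda>x. f' x (axis i 1)) has_derivative g x) (at x)) \<and>
      (\<forall>j. continuous_on UNIV (\<lambda>x. g x (axis j 1)))"
    using f'2 by simp
  then obtain G where G1: "\<And>i x. ((\<lambda>x. f' x (axis i 1)) has_derivative G i x) (at x)"
    and G2: "\<And>i j. continuous_on UNIV (\<lambda>x. G i x (axis j 1))" by metis
  have gr: "grad f = (\<lambda>x. \<chi> i. f' x (axis i 1))"
    using frechet_derivative_at[OF f'1, symmetric] by (simp add: grad_def fun_eq_iff)
  show ?thesis
  proof
    show "(f has_derivative (\<lambda>h. grad f x \<bullet> h)) (at x)" for x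
    proof -
      have "f' x h = grad f x \<bullet> h" for h
        using linear_eq_inner_axis[OF has_derivative_linear[OF f'1[of x]], of h] gr by simp
      then have "f' x = (\<lambda>h. grad f x \<bullet> h)" by blast
      then show ?thesis using f'1[of x] by simp
    qed
    have "continuous_on UNIV (\<lambda>x. f' x (axis i 1))" for i
      using G1 by (meson has_derivative_continuous continuous_at_imp_continuous_on)
    then show "continuous_on UNIV (grad f)"
      unfolding gr by (intro continuous_on_vec_lambda)
    show "(grad f has_derivative (\<lambda>h. \<chi> i. G i x h)) (at x)" for x
      unfolding gr by (rule has_derivative_vec_lambda) (simp add: G1)
    show "continuous_on UNIV (\<lambda>x. (\<chi> i. G i x (axis j 1)))" for j
      by (intro continuous_on_vec_lambda G2)
  qed
qed

lemma increasing_first_zero: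
  fixes \<phi> \<phi>' :: "real \<Rightarrow> real"
  assumes der: "\<And>s. (\<phi> has_real_derivative \<phi>' s) (at s)"
    and lb: "\<And>s. 0 \<le> s \<Longrightarrow> s \<le> r \<Longrightarrow> \<phi>' s \<ge> c" and c: "c > 0"
    and neg: "\<phi> 0 < 0" and reach: "\<phi> 0 + c * r \<ge> 0"
  obtains s1 where "0 < s1" "s1 \<le> - \<phi> 0 / c" "\<phi> s1 = 0" "\<And>s. 0 \<le> s \<Longrightarrow> s \<le> s1 \<Longrightarrow> \<phi> s \<le> 0"
proof -
  have "c * r > 0" using neg reach by linarith
  then have r: "r > 0" using c by (simp add: zero_less_mult_iff)
  have mvt: "\<phi> b - \<phi> a \<ge> (b - a) * c" if ab: "0 \<le> a" "a < b" "b \<le> r" for a b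
  proof -
    obtain z where z: "a < z" "z < b" "\<phi> b - \<phi> a = (b - a) * \<phi>' z"
      using MVT2[OF ab(2) der] by blast
    have "(b - a) * c \<le> (b - a) * \<phi>' z" using lb[of z] z ab by (intro mult_left_mono) auto
    then show ?thesis using z by simp
  qed
  have "\<phi> r \<ge> 0" using mvt[of 0 r] r reach by (simp add: mult.commute)
  moreover have "\<forall>s. 0 \<le> s \<and> s \<le> r \<longrightarrow> isCont \<phi> s" using der DERIV_isCont by blast
  ultimately obtain s1 where s1: "0 \<le> s1" "s1 \<le> r" "\<phi> s1 = 0"
    using IVT[of \<phi> 0 0 r] neg r by auto
  have s1pos: "s1 > 0" using s1 neg by (cases "s1 = 0") auto
  show ?thesis
  proof
    show "0 < s1" by fact
    show "\<phi> s1 = 0" by fact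
    have "\<phi> s1 - \<phi> 0 \<ge> s1 * c" using mvt[of 0 s1] s1 s1pos by simp
    then show "s1 \<le> - \<phi> 0 / c" using s1 c by (simp add: field_simps)
    show "\<phi> s \<le> 0" if s: "0 \<le> s" "s \<le> s1" for s
    proof (cases "s = s1")
      case False
      then have "\<phi> s1 - \<phi> s \<ge> (s1 - s) * c" using mvt[of s s1] s s1 by simp
      moreover have "(s1 - s) * c \<ge> 0" using s c by simp
      ultimately show ?thesis using s1 by simp
    qed (use s1 in simp)
  qed
qed

section \<open>Integrals\<close>

lemma abs_difference_quotient_le:
  fixes f f' :: "real \<Rightarrow> real"
  assumes st: "s \<noteq> t"
    and der: "\<And>\<tau>. \<tau> \<in> closed_segment t s \<Longrightarrow> (f has_real_derivative f' \<tau>) (at \<tau>)"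
    and osc: "\<And>\<tau>. \<tau> \<in> closed_segment t s \<Longrightarrow> \<bar>f' \<tau> - f' t\<bar> \<le> \<epsilon>"
  shows "\<bar>(f s - f t) / (s - t) - f' t\<bar> \<le> \<epsilon>"
proof -
  define \<phi> where "\<phi> \<tau> = f \<tau> - \<tau> * f' t" for \<tau>
  have "norm (\<phi> s - \<phi> t) \<le> \<epsilon> * norm (s - t)"
  proof (rule differentiable_bound[OF convex_closed_segment])
    show "(\<phi> has_derivative (\<lambda>h. h * (f' \<tau> - f' t))) (at \<tau> within closed_segment t s)"
      if "\<tau> \<in> closed_segment t s" for \<tau>
    proof -
      have "(\<phi> has_real_derivative (f' \<tau> - f' t)) (at \<tau>)"
        unfolding \<phi>_def using der[OF that] by (auto intro!: derivative_eq_intros)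
      then show ?thesis
        by (simp add: has_field_derivative_def mult.commute[of _ "f' \<tau> - f' t"] has_derivative_at_withinI)
    qed
    show "onorm (\<lambda>h. h * (f' \<tau> - f' t)) \<le> \<epsilon>" if "\<tau> \<in> closed_segment t s" for \<tau>
    proof (rule onorm_le)
      fix h :: real
      have "\<bar>h\<bar> * \<bar>f' \<tau> - f' t\<bar> \<le> \<bar>h\<bar> * \<epsilon>" using osc[OF that] by (rule mult_left_mono) simp
      then show "norm (h * (f' \<tau> - f' t)) \<le> \<epsilon> * norm h" by (simp add: abs_mult mult.commute)
    qed
  qed auto
  then have "\<bar>f s - f t - (s - t) * f' t\<bar> \<le> \<epsilon> * \<bar>s - t\<bar>" by (simp add: \<phi>_def algebra_simps)
  moreover have "(f s - f t) / (s - t) - f' t = (f s - f t - (s - t) * f' t) / (s - t)"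
    using st by (simp add: field_simps)
  ultimately show ?thesis using st by (simp add: abs_divide pos_divide_le_eq)
qed

lemma divide_double_mult_cancel: "(c::real) > 0 \<Longrightarrow> e / (2 * c) * c = e / 2"
  by simp

lemma integral_small_if_integrand_small:
  fixes \<Omega> :: "'a::euclidean_space set" and r :: real
  assumes \<Omega>: "\<Omega> \<in> lmeasurable" and r: "r > 0"
  obtains \<epsilon> where "\<epsilon> > 0"
    "\<And>f :: 'a \<Rightarrow> real. f integrable_on \<Omega> \<Longrightarrow> (\<And>x. x \<in> \<Omega> \<Longrightarrow> \<bar>f x\<bar> \<le> \<epsilon>) \<Longrightarrow> \<bar>integral \<Omega> f\<bar> < r"
proof -
  define m where "m = measure lebesgue \<Omega>"
  define \<epsilon> where "\<epsilon> = r / (2 * (m + 1))"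
  have m: "m + 1 > 0" using measure_nonneg[of lebesgue \<Omega>] by (simp add: m_def add_nonneg_pos)
  have \<epsilon>: "\<epsilon> > 0" using m r by (simp add: \<epsilon>_def)
  have "\<bar>integral \<Omega> f\<bar> < r"
    if f: "f integrable_on \<Omega>" and le: "\<And>x. x \<in> \<Omega> \<Longrightarrow> \<bar>f x\<bar> \<le> \<epsilon>" for f :: "'a \<Rightarrow> real"
  proof -
    have "norm (integral \<Omega> f) \<le> integral \<Omega> (\<lambda>_. \<epsilon>)"
      by (rule integral_norm_bound_integral[OF f integrable_on_const[OF \<Omega>]]) (use le in auto)
    also have "\<dots> = \<epsilon> * m"
      using lmeasure_integral[OF \<Omega>] integral_mult_right[of \<Omega> \<epsilon> "\<lambda>_. 1::real"] by (simp add: m_def)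
    also have "\<dots> \<le> \<epsilon> * (m + 1)" using \<epsilon> by simp
    also have "\<dots> = r / 2"
      unfolding \<epsilon>_def by (rule divide_double_mult_cancel[OF m])
    also have "\<dots> < r" using r by simp
    finally show ?thesis by simp
  qed
  with \<epsilon> show ?thesis by (rule that)
qed

lemma has_integral_translate_compact_support:
  fixes G :: "'a::euclidean_space \<Rightarrow> real"
  assumes "(G has_integral I) (cbox a b)" and "\<And>x. x \<notin> cbox a b \<Longrightarrow> G x = 0"
  shows "((\<lambda>x. G (x + c)) has_integral I) UNIV"
proof -
  have "((\<lambda>x. G (1 *\<^sub>R x + c)) has_integral (I /\<^sub>R 1 ^ DIM('a))) (cbox ((a - c) /\<^sub>R 1) ((b - c) /\<^sub>R 1))"
    using has_integral_affinity'[OF assms(1), of 1 c] by simp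
  then have "((\<lambda>x. G (x + c)) has_integral I) (cbox (a - c) (b - c))" by simp
  moreover have "G (x + c) = 0" if "x \<notin> cbox (a - c) (b - c)" for x
  proof -
    have "x \<in> cbox (a - c) (b - c)" if "x + c \<in> cbox a b"
      using that by (auto simp: mem_box inner_diff_left inner_add_left)
    then show ?thesis using assms(2) \<open>x \<notin> cbox (a - c) (b - c)\<close> by blast
  qed
  ultimately show ?thesis by (rule has_integral_on_superset) auto
qed

lemma has_derivative_zero_outside_support:
  fixes G :: "'a::real_normed_vector \<Rightarrow> real"
  assumes "(G has_derivative DG) (at x)" and "\<And>x. norm x > R \<Longrightarrow> G x = 0" and "norm x > R"
  shows "DG = (\<lambda>_. 0)"
proof -
  have "((\<lambda>_. 0) has_derivative (\<lambda>_. 0)) (at x)" by simp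
  then have "(G has_derivative (\<lambda>_. 0)) (at x)"
    by (rule has_derivative_transform_within_open[where s="{y. R < norm y}"])
       (use assms in \<open>auto intro: open_Collect_less continuous_intros\<close>)
  then show ?thesis using assms(1) has_derivative_unique by blast
qed

lemma uniform_difference_quotient:
  fixes G :: "'a::euclidean_space \<Rightarrow> real"
  assumes der: "\<And>x. (G has_derivative DG x) (at x)"
    and cont: "continuous_on UNIV (\<lambda>x. DG x e)"
    and supp: "\<And>x. norm x > R \<Longrightarrow> G x = 0"
    and e: "norm e \<le> 1" and \<epsilon>: "\<epsilon> > 0"
  obtains h where "0 < h" "h < 1" "\<And>x. \<bar>(G (x + h *\<^sub>R e) - G x) / h - DG x e\<bar> \<le> \<epsilon>"
proof -
  have DG0: "DG x e = 0" if "norm x > R" for x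
    using has_derivative_zero_outside_support[OF der supp that] by simp
  have "uniformly_continuous_on (cball 0 (R+2)) (\<lambda>x. DG x e)"
    by (rule compact_uniformly_continuous) (use cont in \<open>auto intro: continuous_on_subset\<close>)
  then obtain d where d: "d > 0" and dd: "\<And>x x'. x \<in> cball 0 (R+2) \<Longrightarrow> x' \<in> cball 0 (R+2) \<Longrightarrow>
      dist x' x < d \<Longrightarrow> dist (DG x' e) (DG x e) < \<epsilon>"
    using \<epsilon> unfolding uniformly_continuous_on_def by metis
  define h where "h = min (d/2) (1/2)"
  have h: "0 < h" "h < d" "h < 1" using d by (auto simp: h_def)
  have "\<bar>(G (x + h *\<^sub>R e) - G x) / h - DG x e\<bar> \<le> \<epsilon>" for x
  proof (cases "norm x \<le> R + 1")
    case True
    have near: "x + \<tau> *\<^sub>R e \<in> cball 0 (R+2) \<and> dist (x + \<tau> *\<^sub>R e) x < d" if "\<tau> \<in> closed_segment 0 h" for \<tau>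
    proof -
      have \<tau>: "0 \<le> \<tau>" "\<tau> \<le> h" using that h by (auto simp: closed_segment_eq_real_ivl)
      have "norm (x + \<tau> *\<^sub>R e) \<le> norm x + \<tau> * norm e" using norm_triangle_ineq[of x "\<tau> *\<^sub>R e"] \<tau> by simp
      moreover have "\<tau> * norm e \<le> 1" using \<tau> h e by (simp add: mult_le_one)
      moreover have "dist (x + \<tau> *\<^sub>R e) x \<le> \<tau>" using \<tau> e by (simp add: dist_norm mult_left_le)
      ultimately show ?thesis using True \<tau> h by auto
    qed
    have "\<bar>(G (x + h *\<^sub>R e) - G (x + 0 *\<^sub>R e)) / (h - 0) - DG (x + 0 *\<^sub>R e) e\<bar> \<le> \<epsilon>"
    proof (rule abs_difference_quotient_le[where f="\<lambda>s. G (x + s *\<^sub>R e)"])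
      show "((\<lambda>s. G (x + s *\<^sub>R e)) has_real_derivative DG (x + \<tau> *\<^sub>R e) e) (at \<tau>)" for \<tau>
        by (rule has_real_derivative_along_line[OF der])
      show "\<bar>DG (x + \<tau> *\<^sub>R e) e - DG (x + 0 *\<^sub>R e) e\<bar> \<le> \<epsilon>" if "\<tau> \<in> closed_segment 0 h" for \<tau>
        using dd[of x "x + \<tau> *\<^sub>R e"] near[OF that] True by (auto simp: dist_real_def)
    qed (use h in auto)
    then show ?thesis by simp
  next
    case False
    have "norm (x + h *\<^sub>R e) \<ge> norm x - h * norm e"
      using norm_triangle_ineq2[of x "- (h *\<^sub>R e)"] h by simp
    moreover have "h * norm e \<le> 1" using h e by (simp add: mult_le_one)
    ultimately show ?thesis using False supp DG0 \<epsilon> by simp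
  qed
  with h show ?thesis by (intro that) auto
qed

text \<open>The fundamental theorem of calculus in direction e, integrated over the remaining
  variables, without Fubini: all translates of G have the same integral, so the difference quotients
  integrate to zero, and they converge uniformly to the partial derivative.\<close>

lemma has_integral_partial_derivative_compact_support:
  fixes G :: "'a::euclidean_space \<Rightarrow> real"
  assumes der: "\<And>x. (G has_derivative DG x) (at x)"
    and cont: "continuous_on UNIV (\<lambda>x. DG x e)"
    and supp: "\<And>x. norm x > R \<Longrightarrow> G x = 0"
    and e: "norm e \<le> 1"
  shows "((\<lambda>x. DG x e) has_integral 0) UNIV"
proof -
  obtain a where a: "cball (0::'a) (R+2) \<subseteq> cbox (-a) a"
    using bounded_subset_cbox_symmetric[of "cball (0::'a) (R+2)"] by auto
  define B where "B = cbox (-a) a"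
  have outB: "norm x > R + 2" if "x \<notin> B" for x
    using that a by (force simp: B_def)
  have G0: "G (x + c) = 0" if "x \<notin> B" "norm c \<le> 1" for x c
  proof -
    have "norm (x + c) \<ge> norm x - norm c"
      using norm_triangle_ineq2[of x "- c"] by simp
    then show ?thesis using outB[OF that(1)] that(2) by (intro supp) linarith
  qed
  have DG0: "DG x e = 0" if "x \<notin> B" for x
    using has_derivative_zero_outside_support[OF der supp] outB[OF that] by fastforce
  have "continuous_on B G"
    using der by (meson has_derivative_continuous continuous_at_imp_continuous_on continuous_on_subset subset_UNIV)
  then obtain I where "(G has_integral I) B"
    using integrable_continuous[of "-a" a G] by (auto simp: B_def)
  then have shifts: "((\<lambda>x. G (x + c)) has_integral I) UNIV" for c
    using has_integral_translate_compact_support[of G I "-a" a c] G0[of _ 0] by (simp add: B_def)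
  from shifts[of 0] have shift0: "(G has_integral I) UNIV" by simp
  obtain J where "((\<lambda>x. DG x e) has_integral J) B"
    using integrable_continuous[of "-a" a "\<lambda>x. DG x e"] cont by (auto simp: B_def intro: continuous_on_subset)
  then have fJ: "((\<lambda>x. DG x e) has_integral J) UNIV"
    by (rule has_integral_on_superset) (use DG0 in auto)
  have "J = 0"
  proof (rule ccontr)
    assume "J \<noteq> 0"
    obtain \<epsilon> where \<epsilon>: "\<epsilon> > 0" and small: "\<And>f. f integrable_on B \<Longrightarrow> (\<And>x. x \<in> B \<Longrightarrow> \<bar>f x\<bar> \<le> \<epsilon>) \<Longrightarrow>
        \<bar>integral B f\<bar> < \<bar>J\<bar>"
      using integral_small_if_integrand_small[of B "\<bar>J\<bar>"] \<open>J \<noteq> 0\<close> by (auto simp: B_def)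
    obtain h where h: "0 < h" "h < 1" and Qb: "\<And>x. \<bar>(G (x + h *\<^sub>R e) - G x) / h - DG x e\<bar> \<le> \<epsilon>"
      using uniform_difference_quotient[OF der cont supp e \<epsilon>] by blast
    define Q where "Q x = (G (x + h *\<^sub>R e) - G x) / h - DG x e" for x
    have "(Q has_integral ((I - I) / h - J)) UNIV"
      unfolding Q_def by (intro has_integral_divide has_integral_diff shifts shift0 fJ)
    moreover have "(\<lambda>x. if x \<in> B then Q x else 0) = Q"
    proof -
      have "norm (h *\<^sub>R e) \<le> 1" using h e by (simp add: mult_le_one)
      then show ?thesis using G0[of _ "h *\<^sub>R e"] G0[of _ 0] DG0 by (auto simp: Q_def fun_eq_iff)
    qed
    ultimately have Q: "(Q has_integral - J) B"
      by (metis has_integral_restrict_UNIV diff_self div_0 diff_0)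
    then have "\<bar>integral B Q\<bar> = \<bar>J\<bar>" by (simp add: integral_unique)
    moreover have "\<bar>integral B Q\<bar> < \<bar>J\<bar>"
      using Q Qb by (intro small) (auto simp: Q_def)
    ultimately show False by simp
  qed
  with fJ show ?thesis by simp
qed

lemma continuous_on_slice:
  assumes "continuous_on (A \<times> B) (\<lambda>(x,s). f x s)" "s \<in> B"
  shows "continuous_on A (\<lambda>x. f x s)"
proof -
  have "continuous_on A (\<lambda>x. (\<lambda>(x,s). f x s) (x, s))"
    by (rule continuous_on_compose2[OF assms(1)]) (use assms(2) in \<open>auto intro!: continuous_intros\<close>)
  then show ?thesis by simp
qed

lemma integrable_on_continuous_closure:
  fixes f :: "'a::euclidean_space \<Rightarrow> real"
  assumes "bounded \<Omega>" "open \<Omega>" "continuous_on (closure \<Omega>) f"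
  shows "f integrable_on \<Omega>"
proof -
  have lm: "\<Omega> \<in> lmeasurable" by (rule lmeasurable_open[OF assms(1,2)])
  then have sl: "\<Omega> \<in> sets lebesgue" by (simp add: fmeasurableD)
  obtain M where M: "\<And>x. x \<in> closure \<Omega> \<Longrightarrow> norm (f x) \<le> M"
    using compact_continuous_norm_bound[OF assms(3)] compact_closure assms(1) by metis
  show ?thesis
  proof (rule measurable_bounded_by_integrable_imp_integrable_real)
    show "f \<in> borel_measurable (lebesgue_on \<Omega>)"
      by (rule continuous_imp_measurable_on_sets_lebesgue[OF continuous_on_subset[OF assms(3) closure_subset] sl])
    show "(\<lambda>_. M) integrable_on \<Omega>" by (rule integrable_on_const[OF lm])
    show "\<bar>f x\<bar> \<le> M" if "x \<in> \<Omega>" for x using M[of x] that closure_subset by auto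
  qed (rule sl)
qed

lemma continuous_on_integral_param:
  fixes u :: "'a::euclidean_space \<Rightarrow> real \<Rightarrow> real"
  assumes b: "bounded \<Omega>" and o: "open \<Omega>" and J: "compact J"
    and cont: "continuous_on (closure \<Omega> \<times> J) (\<lambda>(x,s). u x s)"
  shows "continuous_on J (\<lambda>s. integral \<Omega> (\<lambda>x. u x s))"
  unfolding continuous_on_iff
proof (intro ballI allI impI)
  fix s r assume sJ: "s \<in> J" and r: "(r::real) > 0"
  let ?K = "closure \<Omega>"
  have uint: "(\<lambda>x. u x s) integrable_on \<Omega>" if "s \<in> J" for s
    using integrable_on_continuous_closure[OF b o continuous_on_slice[OF cont that]] .
  obtain \<epsilon> where \<epsilon>: "\<epsilon> > 0" and small: "\<And>f. f integrable_on \<Omega> \<Longrightarrow> (\<And>x. x \<in> \<Omega> \<Longrightarrow> \<bar>f x\<bar> \<le> \<epsilon>) \<Longrightarrow>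
      \<bar>integral \<Omega> f\<bar> < r"
    using integral_small_if_integrand_small[OF lmeasurable_open[OF b o] r] by blast
  have "uniformly_continuous_on (?K \<times> J) (\<lambda>(x,s). u x s)"
    using compact_uniformly_continuous[OF cont compact_Times[OF _ J]] b by (simp add: compact_closure)
  then obtain d where d: "d > 0" and dd: "\<And>p p'. p \<in> ?K \<times> J \<Longrightarrow> p' \<in> ?K \<times> J \<Longrightarrow> dist p' p < d \<Longrightarrow>
       dist ((\<lambda>(x,s). u x s) p') ((\<lambda>(x,s). u x s) p) < \<epsilon>"
    using \<epsilon> unfolding uniformly_continuous_on_def by metis
  have "dist (integral \<Omega> (\<lambda>x. u x s')) (integral \<Omega> (\<lambda>x. u x s)) < r"
    if s'J: "s' \<in> J" and ds: "dist s' s < d" for s'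
  proof -
    have "\<bar>u x s' - u x s\<bar> \<le> \<epsilon>" if "x \<in> \<Omega>" for x
    proof -
      have "x \<in> ?K" using that closure_subset by blast
      then have "dist (u x s') (u x s) < \<epsilon>"
        using dd[of "(x,s)" "(x,s')"] sJ s'J ds by (simp add: dist_Pair_Pair)
      then show ?thesis by (simp add: dist_real_def)
    qed
    then have "\<bar>integral \<Omega> (\<lambda>x. u x s' - u x s)\<bar> < r"
      by (intro small integrable_diff uint s'J sJ)
    then show ?thesis by (simp add: dist_real_def integral_diff uint s'J sJ)
  qed
  with d show "\<exists>d>0. \<forall>s'\<in>J. dist s' s < d \<longrightarrow> dist (integral \<Omega> (\<lambda>x. u x s')) (integral \<Omega> (\<lambda>x. u x s)) < r"
    by blast
qed

lemma has_real_derivative_integral_param: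
  fixes u ut :: "'a::euclidean_space \<Rightarrow> real \<Rightarrow> real"
  assumes b: "bounded \<Omega>" and o: "open \<Omega>"
    and der: "\<And>x s. x \<in> closure \<Omega> \<Longrightarrow> s \<in> {a<..<c} \<Longrightarrow> ((\<lambda>s. u x s) has_real_derivative ut x s) (at s)"
    and cont: "continuous_on (closure \<Omega> \<times> {a<..<c}) (\<lambda>(x,s). ut x s)"
    and ucont: "\<And>s. s \<in> {a<..<c} \<Longrightarrow> continuous_on (closure \<Omega>) (\<lambda>x. u x s)"
    and t: "t \<in> {a<..<c}"
  shows "((\<lambda>s. integral \<Omega> (\<lambda>x. u x s)) has_real_derivative integral \<Omega> (\<lambda>x. ut x t)) (at t)"
  unfolding has_field_derivative_iff LIM_eq
proof (intro allI impI)
  fix r :: real assume r: "r > 0"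
  let ?K = "closure \<Omega>"
  define \<delta> where "\<delta> = min (t - a) (c - t) / 2"
  define J where "J = {t - \<delta> .. t + \<delta>}"
  have \<delta>: "\<delta> > 0" "\<delta> < t - a" "\<delta> < c - t" using t by (auto simp: \<delta>_def)
  then have J: "J \<subseteq> {a<..<c}" and tJ: "t \<in> J" by (auto simp: J_def)
  have uint: "(\<lambda>x. u x s) integrable_on \<Omega>" if "s \<in> {a<..<c}" for s
    by (rule integrable_on_continuous_closure[OF b o ucont[OF that]])
  have utint: "(\<lambda>x. ut x t) integrable_on \<Omega>"
    by (rule integrable_on_continuous_closure[OF b o continuous_on_slice[OF cont t]])
  obtain \<epsilon> where \<epsilon>: "\<epsilon> > 0" and small: "\<And>f. f integrable_on \<Omega> \<Longrightarrow> (\<And>x. x \<in> \<Omega> \<Longrightarrow> \<bar>f x\<bar> \<le> \<epsilon>) \<Longrightarrow>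
      \<bar>integral \<Omega> f\<bar> < r"
    using integral_small_if_integrand_small[OF lmeasurable_open[OF b o] r] by blast
  have "uniformly_continuous_on (?K \<times> J) (\<lambda>(x,s). ut x s)"
    by (rule compact_uniformly_continuous[OF continuous_on_subset[OF cont]])
       (use J b in \<open>auto simp: J_def compact_closure intro: compact_Times\<close>)
  then obtain d where d: "d > 0" and dd: "\<And>p p'. p \<in> ?K \<times> J \<Longrightarrow> p' \<in> ?K \<times> J \<Longrightarrow> dist p' p < d \<Longrightarrow>
       dist ((\<lambda>(x,s). ut x s) p') ((\<lambda>(x,s). ut x s) p) < \<epsilon>"
    using \<epsilon> unfolding uniformly_continuous_on_def by metis
  have "norm ((integral \<Omega> (\<lambda>x. u x s) - integral \<Omega> (\<lambda>x. u x t)) / (s - t) - integral \<Omega> (\<lambda>x. ut x t)) < r"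
    if s: "s \<noteq> t" "norm (s - t) < min d \<delta>" for s
  proof -
    have seg: "closed_segment t s \<subseteq> J"
      using s by (auto simp: J_def closed_segment_eq_real_ivl)
    have sJ: "s \<in> {a<..<c}" using seg J by auto
    have "\<bar>(u x s - u x t) / (s - t) - ut x t\<bar> \<le> \<epsilon>" if x: "x \<in> ?K" for x
    proof (rule abs_difference_quotient_le[OF s(1)])
      show "((\<lambda>s. u x s) has_real_derivative ut x \<tau>) (at \<tau>)" if "\<tau> \<in> closed_segment t s" for \<tau>
        using der[OF x] that seg J by blast
      show "\<bar>ut x \<tau> - ut x t\<bar> \<le> \<epsilon>" if "\<tau> \<in> closed_segment t s" for \<tau>
      proof -
        have "dist \<tau> t \<le> dist s t" using that by (auto simp: dist_real_def closed_segment_eq_real_ivl split: if_splits)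
        then have "dist (x, \<tau>) (x, t) < d" using s by (simp add: dist_Pair_Pair dist_real_def)
        moreover have "\<tau> \<in> J" using that seg by blast
        ultimately have "dist (ut x \<tau>) (ut x t) < \<epsilon>" using dd[of "(x,t)" "(x,\<tau>)"] x tJ by auto
        then show ?thesis by (simp add: dist_real_def)
      qed
    qed
    then have "\<bar>integral \<Omega> (\<lambda>x. (u x s - u x t) / (s - t) - ut x t)\<bar> < r"
      using closure_subset by (intro small integrable_diff integrable_on_divide integrable_diff uint sJ t utint) auto
    moreover have "integral \<Omega> (\<lambda>x. (u x s - u x t) / (s - t) - ut x t) =
        (integral \<Omega> (\<lambda>x. u x s) - integral \<Omega> (\<lambda>x. u x t)) / (s - t) - integral \<Omega> (\<lambda>x. ut x t)"
      by (intro integral_unique has_integral_diff has_integral_divide integrable_integral uint sJ t utint)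
    ultimately show ?thesis by simp
  qed
  then show "\<exists>\<sigma>>0. \<forall>s. s \<noteq> t \<and> norm (s - t) < \<sigma> \<longrightarrow>
      norm ((integral \<Omega> (\<lambda>x. u x s) - integral \<Omega> (\<lambda>x. u x t)) / (s - t) - integral \<Omega> (\<lambda>x. ut x t)) < r"
    using d \<delta> by (intro exI[of _ "min d \<delta>"]) auto
qed

section \<open>Domains given by a defining function\<close>

locale domain_defining_fun =
  fixes \<Omega> :: "(real^'n) set" and \<rho> :: "real^'n \<Rightarrow> real"
  assumes dom: "bounded_smooth_domain \<Omega>" and rdef: "defining_fun \<Omega> \<rho>"
begin

lemma Omega_eq: "\<Omega> = {x. \<rho> x < 0}"
  using rdef by (simp add: defining_fun_def)

lemma grad_nonzero: "\<rho> x = 0 \<Longrightarrow> grad \<rho> x \<noteq> 0"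
  using rdef by (simp add: defining_fun_def)

lemma open_Omega: "open \<Omega>" and bounded_Omega: "bounded \<Omega>" and Omega_nonempty: "\<Omega> \<noteq> {}"
  using dom by (simp_all add: bounded_smooth_domain_def)

lemma compact_closure_Omega: "compact (closure \<Omega>)"
  using bounded_Omega by (simp add: compact_closure)

lemma lmeasurable_Omega: "\<Omega> \<in> lmeasurable"
  by (rule lmeasurable_open[OF bounded_Omega open_Omega])

lemma Ck_2_rho: "Ck 2 \<rho>"
  using rdef by (simp add: defining_fun_def smooth_fun_def)

lemma rho_has_derivative: "(\<rho> has_derivative (\<lambda>h. grad \<rho> x \<bullet> h)) (at x)"
  using Ck_2_grad[OF Ck_2_rho] by metis

lemma continuous_on_grad_rho: "continuous_on UNIV (grad \<rho>)"
  using Ck_2_grad[OF Ck_2_rho] by metis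

lemma continuous_on_rho: "continuous_on UNIV \<rho>"
  using rho_has_derivative by (meson has_derivative_continuous continuous_at_imp_continuous_on)

lemma closure_eq: "closure \<Omega> = {x. \<rho> x \<le> 0}"
proof
  have "closed {x. \<rho> x \<le> 0}"
    using continuous_on_rho by (simp add: closed_Collect_le continuous_on_const)
  then show "closure \<Omega> \<subseteq> {x. \<rho> x \<le> 0}"
    by (rule closure_minimal[rotated]) (auto simp: Omega_eq)
next
  show "{x. \<rho> x \<le> 0} \<subseteq> closure \<Omega>"
  proof
    fix x assume x: "x \<in> {x. \<rho> x \<le> 0}"
    show "x \<in> closure \<Omega>"
    proof (cases "\<rho> x < 0")
      case True
      then have "x \<in> \<Omega>" using Omega_eq by simp
      then show ?thesis using closure_subset by blast
    next
      case False
      with x have x0: "\<rho> x = 0" by simp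
      let ?v = "- grad \<rho> x"
      have "grad \<rho> x \<bullet> ?v < 0" using grad_nonzero[OF x0] by simp
      then obtain d where d: "d > 0" "\<And>s. 0 < s \<Longrightarrow> s < d \<Longrightarrow> \<rho> (x + s *\<^sub>R ?v) < \<rho> x"
        using has_derivative_decreasing_direction[OF rho_has_derivative] by metis
      show ?thesis unfolding closure_approachable
      proof (intro allI impI)
        fix e :: real assume e: "e > 0"
        define s where "s = min (d/2) (e / (2 * (norm ?v + 1)))"
        have npos: "0 < norm ?v + 1" by (simp add: add_nonneg_pos)
        then have "0 < e / (2 * (norm ?v + 1))" using e by simp
        then have s: "0 < s" "s < d" using d by (auto simp: s_def)
        have "s * norm ?v \<le> e / (2 * (norm ?v + 1)) * (norm ?v + 1)"
          using s by (intro mult_mono) (auto simp: s_def)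
        also have "\<dots> = e / 2" by (rule divide_double_mult_cancel[OF npos])
        finally have "dist (x + s *\<^sub>R ?v) x < e" using s e by (simp add: dist_norm)
        moreover have "x + s *\<^sub>R ?v \<in> \<Omega>" using d(2)[OF s] x0 Omega_eq by simp
        ultimately show "\<exists>y\<in>\<Omega>. dist y x < e" by blast
      qed
    qed
  qed
qed

lemma frontier_eq: "frontier \<Omega> = {x. \<rho> x = 0}"
  unfolding frontier_def interior_open[OF open_Omega] closure_eq by (subst Omega_eq) auto

lemma at_within_closure_eq_at:
  assumes "x \<in> \<Omega>"
  shows "at x within closure \<Omega> = at x"
proof -
  have "\<Omega> \<subseteq> interior (closure \<Omega>)" by (rule interior_maximal[OF closure_subset open_Omega])
  then show ?thesis using assms by (intro at_within_interior) blast
qed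

text \<open>Two defining functions of the same domain have positively proportional gradients on the
  boundary; otherwise some direction would enter the domain according to one and leave it according
  to the other.\<close>

lemma outward_normal_eq:
  assumes y: "y \<in> frontier \<Omega>"
  shows "outward_normal \<Omega> y = (1 / norm (grad \<rho> y)) *\<^sub>R grad \<rho> y"
proof -
  have "\<exists>\<nu> \<sigma>. defining_fun \<Omega> \<sigma> \<and> \<nu> = (1 / norm (grad \<sigma> y)) *\<^sub>R grad \<sigma> y"
    using rdef by blast
  from someI_ex[OF this] obtain \<sigma> where sdef: "defining_fun \<Omega> \<sigma>"
    and nu: "outward_normal \<Omega> y = (1 / norm (grad \<sigma> y)) *\<^sub>R grad \<sigma> y"
    unfolding outward_normal_def by blast
  interpret \<sigma>: domain_defining_fun \<Omega> \<sigma> by unfold_locales (fact dom sdef)+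
  have "y \<in> {x. \<rho> x = 0}" using y by (simp only: frontier_eq)
  moreover have "y \<in> {x. \<sigma> x = 0}" using y by (simp only: \<sigma>.frontier_eq)
  ultimately have y0: "\<rho> y = 0" "\<sigma> y = 0" by simp_all
  define a where "a = (1 / norm (grad \<rho> y)) *\<^sub>R grad \<rho> y"
  define b where "b = (1 / norm (grad \<sigma> y)) *\<^sub>R grad \<sigma> y"
  have na: "grad \<rho> y \<noteq> 0" and nb: "grad \<sigma> y \<noteq> 0"
    using grad_nonzero \<sigma>.grad_nonzero y0 by auto
  have aa: "a \<bullet> a = 1" and bb: "b \<bullet> b = 1"
    using na nb by (simp_all add: a_def b_def flip: power2_norm_eq_inner)
  show ?thesis
  proof (rule ccontr)
    assume "outward_normal \<Omega> y \<noteq> (1 / norm (grad \<rho> y)) *\<^sub>R grad \<rho> y"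
    then have "a \<noteq> b" using nu by (simp add: a_def b_def)
    then have "0 < (norm (a - b))^2" by simp
    also have "(norm (a - b))^2 = 2 - 2 * (a \<bullet> b)"
      using aa bb by (simp add: power2_norm_eq_inner inner_diff_left inner_diff_right inner_commute)
    finally have ab1: "a \<bullet> b < 1" by linarith
    have "grad \<rho> y = norm (grad \<rho> y) *\<^sub>R a" using na by (simp add: a_def)
    then have "grad \<rho> y \<bullet> (b - a) = (norm (grad \<rho> y) *\<^sub>R a) \<bullet> (b - a)" by simp
    also have "\<dots> = norm (grad \<rho> y) * (a \<bullet> b - 1)" using aa by (simp add: inner_diff_right algebra_simps)
    finally have "grad \<rho> y \<bullet> (b - a) = norm (grad \<rho> y) * (a \<bullet> b - 1)" .
    then have "grad \<rho> y \<bullet> (b - a) < 0" using na ab1 by (simp add: mult_pos_neg)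
    then obtain d1 where d1: "d1 > 0" "\<And>s. 0 < s \<Longrightarrow> s < d1 \<Longrightarrow> \<rho> (y + s *\<^sub>R (b - a)) < \<rho> y"
      using has_derivative_decreasing_direction[OF rho_has_derivative] by metis
    have "grad \<sigma> y = norm (grad \<sigma> y) *\<^sub>R b" using nb by (simp add: b_def)
    then have "grad \<sigma> y \<bullet> (b - a) = (norm (grad \<sigma> y) *\<^sub>R b) \<bullet> (b - a)" by simp
    also have "\<dots> = norm (grad \<sigma> y) * (1 - a \<bullet> b)" using bb by (simp add: inner_diff_right inner_commute)
    finally have "grad \<sigma> y \<bullet> (b - a) = norm (grad \<sigma> y) * (1 - a \<bullet> b)" .
    then have "grad \<sigma> y \<bullet> (b - a) > 0" using nb ab1 by simp
    then obtain d2 where d2: "d2 > 0" "\<And>s. 0 < s \<Longrightarrow> s < d2 \<Longrightarrow> \<sigma> (y + s *\<^sub>R (b - a)) > \<sigma> y"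
      using has_derivative_increasing_direction[OF \<sigma>.rho_has_derivative] by metis
    define s where "s = min d1 d2 / 2"
    have s: "0 < s" "s < d1" "s < d2" using d1 d2 by (auto simp: s_def)
    have "y + s *\<^sub>R (b - a) \<in> \<Omega>" using d1(2)[OF s(1,2)] y0 Omega_eq by simp
    moreover have "y + s *\<^sub>R (b - a) \<notin> \<Omega>" using d2(2)[OF s(1,3)] y0 \<sigma>.Omega_eq by simp
    ultimately show False by blast
  qed
qed

lemma neumann_zero_at_imp_inner_grad_zero:
  assumes y: "y \<in> frontier \<Omega>"
    and fd: "(f has_derivative (\<lambda>h. g \<bullet> h)) (at y within closure \<Omega>)"
    and nz: "neumann_zero_at \<Omega> f y"
  shows "g \<bullet> grad \<rho> y = 0"
proof -
  obtain D where D: "(f has_derivative D) (at y within closure \<Omega>)" "D (outward_normal \<Omega> y) = 0"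
    using nz by (auto simp: neumann_zero_at_def)
  let ?N = "grad \<rho> y"
  have y0: "\<rho> y = 0" using y frontier_eq by auto
  have N0: "?N \<noteq> 0" using grad_nonzero[OF y0] .
  have lin: "linear D" using D(1) has_derivative_linear by blast
  have "D ?N = norm ?N * D (outward_normal \<Omega> y)"
    using N0 lin by (simp add: outward_normal_eq[OF y] linear_scale)
  then have DN: "D ?N = 0" using D(2) by simp
  have "?N \<bullet> (- ?N) < 0" using N0 by simp
  then obtain d where d: "d > 0" "\<And>s. 0 < s \<Longrightarrow> s < d \<Longrightarrow> \<rho> (y + s *\<^sub>R (- ?N)) < \<rho> y"
    using has_derivative_decreasing_direction[OF rho_has_derivative] by metis
  have seg: "y + s *\<^sub>R (- ?N) \<in> closure \<Omega>" if "0 \<le> s" "s \<le> d/2" for s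
  proof (cases "s = 0")
    case False
    then have "\<rho> (y + s *\<^sub>R (- ?N)) < 0" using d that y0 by auto
    then show ?thesis using closure_eq by simp
  qed (use y in \<open>simp add: frontier_def\<close>)
  have "D (- ?N) = g \<bullet> (- ?N)"
    by (rule has_derivative_within_unique_direction[OF D(1) fd, of "d/2"]) (use d seg in auto)
  moreover have "D (- ?N) = - D ?N" using lin by (simp add: linear_neg)
  ultimately show ?thesis using DN by simp
qed

lemma uniform_slope_near_frontier:
  obtains c r \<eta> where "c > 0" "r > 0" "\<eta> > 0" "\<eta> \<le> c * r / 2"
    "\<And>x. x \<in> \<Omega> \<Longrightarrow> \<rho> x > -\<eta> \<Longrightarrow> grad \<rho> x \<noteq> 0"
    "\<And>x s. x \<in> \<Omega> \<Longrightarrow> \<rho> x > -\<eta> \<Longrightarrow> 0 \<le> s \<Longrightarrow> s \<le> r \<Longrightarrow>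
       c \<le> grad \<rho> (x + s *\<^sub>R sgn (grad \<rho> x)) \<bullet> sgn (grad \<rho> x)"
proof -
  let ?K = "closure \<Omega>" and ?N = "grad \<rho>"
  obtain R where R: "\<And>x. x \<in> ?K \<Longrightarrow> norm x \<le> R"
    using bounded_closure[OF bounded_Omega] by (auto simp: bounded_iff)
  have fcont: "continuous_on ?K (\<lambda>x. \<bar>\<rho> x\<bar> + norm (?N x))"
    using continuous_on_rho continuous_on_grad_rho by (auto intro!: continuous_intros intro: continuous_on_subset)
  have Kne: "?K \<noteq> {}" using Omega_nonempty by simp
  obtain x0 where x0min: "\<And>y. y \<in> ?K \<Longrightarrow> \<bar>\<rho> x0\<bar> + norm (?N x0) \<le> \<bar>\<rho> y\<bar> + norm (?N y)"
    using continuous_attains_inf[OF compact_closure_Omega Kne fcont] by auto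
  define \<mu> where "\<mu> = \<bar>\<rho> x0\<bar> + norm (?N x0)"
  have \<mu>: "\<mu> > 0"
    using grad_nonzero[of x0] by (cases "\<rho> x0 = 0") (auto simp: \<mu>_def add_pos_nonneg)
  have "uniformly_continuous_on (cball 0 (R+1)) ?N"
    by (rule compact_uniformly_continuous) (use continuous_on_grad_rho in \<open>auto intro: continuous_on_subset\<close>)
  moreover have "\<mu>/4 > 0" using \<mu> by simp
  ultimately obtain \<delta> where \<delta>: "\<delta> > 0" and \<delta>N: "\<And>z z'. z \<in> cball 0 (R+1) \<Longrightarrow> z' \<in> cball 0 (R+1) \<Longrightarrow>
      dist z' z < \<delta> \<Longrightarrow> dist (?N z') (?N z) < \<mu>/4"
    unfolding uniformly_continuous_on_def by metis
  define r where "r = min (\<delta>/2) 1"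
  define c where "c = \<mu>/4"
  define \<eta> where "\<eta> = min (\<mu>/2) (c*r/2)"
  have r: "0 < r" "r < \<delta>" "r \<le> 1" using \<delta> by (auto simp: r_def)
  have c: "c > 0" using \<mu> by (simp add: c_def)
  have \<eta>: "\<eta> > 0" "\<eta> \<le> c * r / 2" using \<mu> r c by (auto simp: \<eta>_def)
  have Nx: "norm (?N x) > \<mu>/2" if xO: "x \<in> \<Omega>" and x\<eta>: "\<rho> x > -\<eta>" for x
  proof -
    have "\<mu> \<le> \<bar>\<rho> x\<bar> + norm (?N x)" using x0min xO closure_subset by (auto simp: \<mu>_def)
    moreover have "\<bar>\<rho> x\<bar> < \<mu>/2" using x\<eta> xO Omega_eq by (auto simp: \<eta>_def)
    ultimately show ?thesis by linarith
  qed
  have "c \<le> ?N (x + s *\<^sub>R sgn (?N x)) \<bullet> sgn (?N x)"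
    if xO: "x \<in> \<Omega>" and x\<eta>: "\<rho> x > -\<eta>" and s: "0 \<le> s" "s \<le> r" for x s
  proof -
    let ?e = "sgn (?N x)"
    have xK: "x \<in> ?K" using xO closure_subset by blast
    have "norm (?N x) > 0" using Nx[OF xO x\<eta>] \<mu> by linarith
    then have e1: "norm ?e = 1" and Ne: "?N x \<bullet> ?e = norm (?N x)"
      by (simp_all add: norm_sgn sgn_div_norm power2_norm_eq_inner[symmetric] power2_eq_square)
    have "norm (x + s *\<^sub>R ?e) \<le> norm x + norm (s *\<^sub>R ?e)" by (rule norm_triangle_ineq)
    also have "\<dots> \<le> R + 1" using R[OF xK] e1 s r by simp
    finally have "x + s *\<^sub>R ?e \<in> cball 0 (R+1)" by simp
    moreover have "x \<in> cball 0 (R+1)" using R[OF xK] by simp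
    moreover have "dist (x + s *\<^sub>R ?e) x < \<delta>" using s r e1 by (simp add: dist_norm)
    ultimately have "dist (?N (x + s *\<^sub>R ?e)) (?N x) < \<mu>/4" using \<delta>N by blast
    then have "norm (?N (x + s *\<^sub>R ?e) - ?N x) < \<mu>/4" by (simp add: dist_norm)
    moreover have "\<bar>(?N (x + s *\<^sub>R ?e) - ?N x) \<bullet> ?e\<bar> \<le> norm (?N (x + s *\<^sub>R ?e) - ?N x)"
      using Cauchy_Schwarz_ineq2[of "?N (x + s *\<^sub>R ?e) - ?N x" ?e] e1 by simp
    ultimately have "?N (x + s *\<^sub>R ?e) \<bullet> ?e \<ge> ?N x \<bullet> ?e - \<mu>/4"
      by (simp add: inner_diff_left abs_le_iff)
    then show ?thesis using Ne Nx[OF xO x\<eta>] by (simp add: c_def)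
  qed
  moreover have "?N x \<noteq> 0" if "x \<in> \<Omega>" "\<rho> x > -\<eta>" for x
    using Nx[OF that] \<mu> by auto
  ultimately show ?thesis using c r \<eta> by (intro that) auto
qed

lemma frontier_point_within_rho:
  obtains c \<eta> where "c > 0" "\<eta> > 0"
    "\<And>x. x \<in> \<Omega> \<Longrightarrow> \<rho> x > -\<eta> \<Longrightarrow>
       \<exists>y\<in>frontier \<Omega>. closed_segment x y \<subseteq> closure \<Omega> \<and> norm (x - y) \<le> - \<rho> x / c"
proof -
  obtain c r \<eta> where c: "c > 0" and r: "r > 0" and \<eta>: "\<eta> > 0" "\<eta> \<le> c * r / 2"
    and N0: "\<And>x. x \<in> \<Omega> \<Longrightarrow> \<rho> x > -\<eta> \<Longrightarrow> grad \<rho> x \<noteq> 0"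
    and slope: "\<And>x s. x \<in> \<Omega> \<Longrightarrow> \<rho> x > -\<eta> \<Longrightarrow> 0 \<le> s \<Longrightarrow> s \<le> r \<Longrightarrow>
       c \<le> grad \<rho> (x + s *\<^sub>R sgn (grad \<rho> x)) \<bullet> sgn (grad \<rho> x)"
    using uniform_slope_near_frontier by blast
  have "\<exists>y\<in>frontier \<Omega>. closed_segment x y \<subseteq> closure \<Omega> \<and> norm (x - y) \<le> - \<rho> x / c"
    if xO: "x \<in> \<Omega>" and x\<eta>: "\<rho> x > -\<eta>" for x
  proof -
    let ?e = "sgn (grad \<rho> x)"
    have der: "((\<lambda>s. \<rho> (x + s *\<^sub>R ?e)) has_real_derivative grad \<rho> (x + s *\<^sub>R ?e) \<bullet> ?e) (at s)" for s
      by (rule has_real_derivative_along_line[OF rho_has_derivative])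
    have "c * r > 0" using c r by simp
    then have reach: "\<rho> (x + 0 *\<^sub>R ?e) + c * r \<ge> 0" using x\<eta> \<eta> by simp
    have neg0: "\<rho> (x + 0 *\<^sub>R ?e) < 0" using xO Omega_eq by simp
    obtain s1 where s1: "0 < s1" "s1 \<le> - \<rho> (x + 0 *\<^sub>R ?e) / c" "\<rho> (x + s1 *\<^sub>R ?e) = 0"
      and neg: "\<And>s. 0 \<le> s \<Longrightarrow> s \<le> s1 \<Longrightarrow> \<rho> (x + s *\<^sub>R ?e) \<le> 0"
      using increasing_first_zero[OF der slope[OF xO x\<eta>] c neg0 reach] by blast
    define y where "y = x + s1 *\<^sub>R ?e"
    have "y \<in> frontier \<Omega>" using s1 by (simp add: y_def frontier_eq)
    moreover have "closed_segment x y \<subseteq> closure \<Omega>"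
    proof
      fix z assume "z \<in> closed_segment x y"
      then obtain u where u: "0 \<le> u" "u \<le> 1" "z = (1 - u) *\<^sub>R x + u *\<^sub>R y" by (auto simp: in_segment)
      then have "z = x + (u * s1) *\<^sub>R ?e" by (simp add: y_def algebra_simps)
      moreover have "\<rho> (x + (u * s1) *\<^sub>R ?e) \<le> 0" using u s1 by (intro neg) (auto simp: mult_left_le_one_le)
      ultimately show "z \<in> closure \<Omega>" by (simp add: closure_eq)
    qed
    moreover have "norm (x - y) = s1" using s1 N0[OF xO x\<eta>] by (simp add: y_def norm_sgn)
    ultimately show ?thesis using s1(2) by auto
  qed
  with c \<eta> show ?thesis by (intro that[of c \<eta>]) auto
qed

lemma abs_le_rho_near_frontier:
  fixes g :: "real^'n \<Rightarrow> real" and Dg :: "real^'n \<Rightarrow> real^'n \<Rightarrow> real"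
  assumes gder: "\<And>x. x \<in> closure \<Omega> \<Longrightarrow> (g has_derivative Dg x) (at x within closure \<Omega>)"
    and gb: "\<And>x h. x \<in> closure \<Omega> \<Longrightarrow> \<bar>Dg x h\<bar> \<le> L * norm h" and L: "L \<ge> 0"
    and g0: "\<And>y. y \<in> frontier \<Omega> \<Longrightarrow> g y = 0"
  obtains C \<eta> where "C \<ge> 0" "\<eta> > 0" "\<And>x. x \<in> \<Omega> \<Longrightarrow> \<rho> x > -\<eta> \<Longrightarrow> \<bar>g x\<bar> \<le> C * \<bar>\<rho> x\<bar>"
proof -
  obtain c \<eta> where c: "c > 0" and \<eta>: "\<eta> > 0" and near: "\<And>x. x \<in> \<Omega> \<Longrightarrow> \<rho> x > -\<eta> \<Longrightarrow>
      \<exists>y\<in>frontier \<Omega>. closed_segment x y \<subseteq> closure \<Omega> \<and> norm (x - y) \<le> - \<rho> x / c"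
    using frontier_point_within_rho by blast
  have "\<bar>g x\<bar> \<le> L / c * \<bar>\<rho> x\<bar>" if xO: "x \<in> \<Omega>" and x\<eta>: "\<rho> x > -\<eta>" for x
  proof -
    obtain y where y: "y \<in> frontier \<Omega>" and seg: "closed_segment x y \<subseteq> closure \<Omega>"
      and xy: "norm (x - y) \<le> - \<rho> x / c"
      using near[OF xO x\<eta>] by blast
    have "norm (g x - g y) \<le> L * norm (x - y)"
    proof (rule differentiable_bound[OF convex_closed_segment])
      show "(g has_derivative Dg z) (at z within closed_segment x y)" if "z \<in> closed_segment x y" for z
        using has_derivative_subset[OF gder seg] that seg by blast
      show "onorm (Dg z) \<le> L" if "z \<in> closed_segment x y" for z
        using gb that seg by (intro onorm_le) auto
    qed auto
    also have "\<dots> \<le> L * (- \<rho> x / c)" using xy L by (rule mult_left_mono)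
    finally show ?thesis
      using g0[OF y] xO Omega_eq by (simp add: abs_if)
  qed
  with c \<eta> L show ?thesis by (intro that[of "L / c" \<eta>]) auto
qed

end

section \<open>The divergence theorem for fields tangent to the boundary\<close>

lemma has_derivative_zero_extension:
  fixes F :: "'a::real_normed_vector \<Rightarrow> 'b::real_normed_vector"
  assumes U: "open U" and V: "open V" and UV: "U \<union> V = UNIV"
    and der: "\<And>x. x \<in> U \<Longrightarrow> (F has_derivative DF x) (at x)"
    and zero: "\<And>x. x \<in> U \<inter> V \<Longrightarrow> F x = 0"
  shows "((\<lambda>x. if x \<in> U then F x else 0) has_derivative (if x \<in> U then DF x else (\<lambda>_. 0))) (at x)"
proof (cases "x \<in> U")
  case True
  have "((\<lambda>x. if x \<in> U then F x else 0) has_derivative DF x) (at x)"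
    by (rule has_derivative_transform_within_open[OF der[OF True] U True]) simp
  with True show ?thesis by simp
next
  case False
  then have "x \<in> V" using UV by blast
  have "((\<lambda>_. 0) has_derivative (\<lambda>_. 0)) (at x)" by simp
  then have "((\<lambda>x. if x \<in> U then F x else 0) has_derivative (\<lambda>_. 0)) (at x)"
    by (rule has_derivative_transform_within_open[OF _ V \<open>x \<in> V\<close>]) (use zero in auto)
  with False show ?thesis by simp
qed

lemma continuous_on_zero_extension:
  fixes f :: "'a::topological_space \<Rightarrow> 'b::real_normed_vector"
  assumes U: "open U" and V: "open V" and UV: "U \<union> V = UNIV"
    and cont: "continuous_on U f" and zero: "\<And>x. x \<in> U \<inter> V \<Longrightarrow> f x = 0"
  shows "continuous_on UNIV (\<lambda>x. if x \<in> U then f x else 0)"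
proof -
  have "continuous_on (U \<union> V) (\<lambda>x. if x \<in> U then f x else 0)"
  proof (rule continuous_on_open_Un[OF U V])
    show "continuous_on U (\<lambda>x. if x \<in> U then f x else 0)"
      using cont by (rule continuous_on_eq) auto
    show "continuous_on V (\<lambda>x. if x \<in> U then f x else 0)"
      by (rule continuous_on_eq[of _ "\<lambda>_. 0"]) (use zero in auto)
  qed
  with UV show ?thesis by simp
qed

lemma has_integral_divergence_compact_support:
  fixes G :: "real^'n \<Rightarrow> real^'n"
  assumes der: "\<And>x. (G has_derivative DG x) (at x)"
    and cont: "\<And>j. continuous_on UNIV (\<lambda>x. DG x (axis j 1))"
    and supp: "\<And>x. norm x > R \<Longrightarrow> G x = 0"
  shows "((\<lambda>x. \<Sum>i\<in>UNIV. DG x (axis i 1) $ i) has_integral 0) UNIV"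
proof -
  have "((\<lambda>x. DG x (axis i 1) $ i) has_integral 0) UNIV" for i
  proof (rule has_integral_partial_derivative_compact_support[where G="\<lambda>x. G x $ i" and R=R])
    show "((\<lambda>x. G x $ i) has_derivative (\<lambda>h. DG x h $ i)) (at x)" for x
      by (rule has_derivative_vec_nth[OF der])
    show "continuous_on UNIV (\<lambda>x. DG x (axis i 1) $ i)"
      by (intro continuous_on_component cont)
  qed (use supp in auto)
  then have "((\<lambda>x. \<Sum>i\<in>UNIV. DG x (axis i 1) $ i) has_integral (\<Sum>i\<in>(UNIV::'n set). 0)) UNIV"
    by (intro has_integral_sum) auto
  then show ?thesis by simp
qed

context domain_defining_fun
begin

lemma cutoff_rho_has_derivative:
  assumes "\<epsilon> > 0"
  shows "((\<lambda>x. cutoff (\<rho> x / \<epsilon>)) has_derivative (\<lambda>h. cutoff_deriv (\<rho> x / \<epsilon>) * ((grad \<rho> x \<bullet> h) / \<epsilon>))) (at x)"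
proof -
  have "((\<lambda>y. \<rho> y / \<epsilon>) has_derivative (\<lambda>h. (grad \<rho> x \<bullet> h) / \<epsilon>)) (at x)"
    using rho_has_derivative[of x] assms by (auto intro!: derivative_eq_intros)
  moreover have "(cutoff has_derivative (\<lambda>t. cutoff_deriv (\<rho> x / \<epsilon>) * t)) (at (\<rho> x / \<epsilon>))"
    using cutoff_has_real_derivative by (simp add: has_field_derivative_def)
  ultimately show ?thesis by (rule has_derivative_compose)
qed

lemma cutoff_rho_eq_0:
  assumes "\<epsilon> > 0" "\<rho> x > -\<epsilon>"
  shows "cutoff (\<rho> x / \<epsilon>) = 0" and "cutoff_deriv (\<rho> x / \<epsilon>) = 0"
  using assms by (auto simp: field_simps intro!: cutoff_eq_0 cutoff_deriv_eq_0)

lemma has_integral_cutoff_divergence: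
  fixes H :: "real^'n \<Rightarrow> real^'n" and DH :: "real^'n \<Rightarrow> real^'n \<Rightarrow> real^'n"
  assumes Hder: "\<And>x. x \<in> closure \<Omega> \<Longrightarrow> (H has_derivative DH x) (at x within closure \<Omega>)"
    and DHcont: "\<And>j. continuous_on (closure \<Omega>) (\<lambda>x. DH x (axis j 1))"
    and \<epsilon>: "\<epsilon> > 0"
  shows "((\<lambda>x. cutoff (\<rho> x / \<epsilon>) * (\<Sum>i\<in>UNIV. DH x (axis i 1) $ i)
      + cutoff_deriv (\<rho> x / \<epsilon>) / \<epsilon> * (H x \<bullet> grad \<rho> x)) has_integral 0) \<Omega>"
proof -
  let ?K = "closure \<Omega>"
  define \<zeta> where "\<zeta> x = cutoff (\<rho> x / \<epsilon>)" for x
  define D\<zeta> where "D\<zeta> x h = cutoff_deriv (\<rho> x / \<epsilon>) * ((grad \<rho> x \<bullet> h) / \<epsilon>)" for x h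
  define U where "U = {x. \<rho> x < -\<epsilon>/2}"
  define V where "V = {x. \<rho> x > -\<epsilon>}"
  define DF where "DF x h = \<zeta> x *\<^sub>R DH x h + D\<zeta> x h *\<^sub>R H x" for x h
  have U: "open U" unfolding U_def by (rule open_Collect_less[OF continuous_on_rho continuous_on_const])
  have V: "open V" unfolding V_def by (rule open_Collect_less[OF continuous_on_const continuous_on_rho])
  have UO: "U \<subseteq> \<Omega>" using \<epsilon> by (auto simp: U_def Omega_eq)
  have UV: "U \<union> V = UNIV" using \<epsilon> by (auto simp: U_def V_def)
  have V0: "\<zeta> x = 0" "cutoff_deriv (\<rho> x / \<epsilon>) = 0" if "x \<in> V" for x
    using cutoff_rho_eq_0[OF \<epsilon>] that by (simp_all add: V_def \<zeta>_def)
  have Fder: "((\<lambda>x. \<zeta> x *\<^sub>R H x) has_derivative DF x) (at x)" if "x \<in> U" for x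
  proof -
    have xO: "x \<in> \<Omega>" using that UO by blast
    then have "(H has_derivative DH x) (at x)"
      using Hder[of x] closure_subset at_within_closure_eq_at[OF xO] by auto
    with cutoff_rho_has_derivative[OF \<epsilon>] show ?thesis
      unfolding DF_def[abs_def] \<zeta>_def D\<zeta>_def by (rule has_derivative_scaleR)
  qed
  have Hcont: "continuous_on ?K H"
    using Hder by (meson has_derivative_continuous continuous_on_eq_continuous_within)
  have DFcont: "continuous_on U (\<lambda>x. DF x (axis j 1))" for j
  proof -
    have UK: "U \<subseteq> ?K" using UO closure_subset by blast
    show ?thesis
      unfolding DF_def D\<zeta>_def \<zeta>_def using \<epsilon>
      by (intro continuous_intros continuous_on_subset[OF DHcont UK] continuous_on_subset[OF Hcont UK]
          continuous_on_subset[OF continuous_on_grad_rho] continuous_on_compose2[OF continuous_on_cutoff_deriv]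
          continuous_on_compose2[OF continuous_on_cutoff] continuous_on_subset[OF continuous_on_rho]) auto
  qed
  obtain R where R: "\<And>x. x \<in> ?K \<Longrightarrow> norm x \<le> R"
    using bounded_closure[OF bounded_Omega] by (auto simp: bounded_iff)
  have "((\<lambda>x. \<Sum>i\<in>UNIV. (if x \<in> U then DF x else (\<lambda>_. 0)) (axis i 1) $ i) has_integral 0) UNIV"
  proof (rule has_integral_divergence_compact_support)
    show "((\<lambda>x. if x \<in> U then \<zeta> x *\<^sub>R H x else 0) has_derivative (if x \<in> U then DF x else (\<lambda>_. 0))) (at x)"
      for x by (rule has_derivative_zero_extension[OF U V UV Fder]) (simp_all add: V0)
    show "continuous_on UNIV (\<lambda>x. (if x \<in> U then DF x else (\<lambda>_. 0)) (axis j 1))" for j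
    proof -
      have e: "(\<lambda>x. (if x \<in> U then DF x else (\<lambda>_. 0)) (axis j 1)) = (\<lambda>x. if x \<in> U then DF x (axis j 1) else 0)"
        by auto
      show ?thesis unfolding e
        by (rule continuous_on_zero_extension[OF U V UV DFcont]) (simp add: DF_def D\<zeta>_def V0)
    qed
    show "(if x \<in> U then \<zeta> x *\<^sub>R H x else 0) = 0" if "norm x > R" for x
    proof -
      have "x \<notin> U" using that R UO closure_subset by force
      then show ?thesis by simp
    qed
  qed
  moreover have "(\<Sum>i\<in>UNIV. (if x \<in> U then DF x else (\<lambda>_. 0)) (axis i 1) $ i) =
      (if x \<in> \<Omega> then \<zeta> x * (\<Sum>i\<in>UNIV. DH x (axis i 1) $ i)
        + cutoff_deriv (\<rho> x / \<epsilon>) / \<epsilon> * (H x \<bullet> grad \<rho> x) else 0)" for x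
  proof (cases "x \<in> U")
    case True
    then have "(\<Sum>i\<in>UNIV. (if x \<in> U then DF x else (\<lambda>_. 0)) (axis i 1) $ i) = (\<Sum>i\<in>UNIV.
        \<zeta> x * (DH x (axis i 1) $ i) + cutoff_deriv (\<rho> x / \<epsilon>) / \<epsilon> * (H x $ i * grad \<rho> x $ i))"
      by (intro sum.cong) (auto simp: DF_def D\<zeta>_def inner_axis)
    also have "\<dots> = \<zeta> x * (\<Sum>i\<in>UNIV. DH x (axis i 1) $ i)
        + cutoff_deriv (\<rho> x / \<epsilon>) / \<epsilon> * (H x \<bullet> grad \<rho> x)"
      by (simp add: sum.distrib sum_distrib_left inner_vec_def)
    finally show ?thesis using True UO by auto
  next
    case False
    then show ?thesis using UV V0 by auto
  qed
  ultimately show ?thesis by (simp add: \<zeta>_def has_integral_restrict_UNIV)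
qed

lemma inner_grad_rho_le_near_frontier:
  fixes H :: "real^'n \<Rightarrow> real^'n" and DH :: "real^'n \<Rightarrow> real^'n \<Rightarrow> real^'n"
  assumes Hder: "\<And>x. x \<in> closure \<Omega> \<Longrightarrow> (H has_derivative DH x) (at x within closure \<Omega>)"
    and DHcont: "\<And>j. continuous_on (closure \<Omega>) (\<lambda>x. DH x (axis j 1))"
    and tangent: "\<And>y. y \<in> frontier \<Omega> \<Longrightarrow> H y \<bullet> grad \<rho> y = 0"
  obtains C \<eta> where "C \<ge> 0" "\<eta> > 0"
    "\<And>x. x \<in> \<Omega> \<Longrightarrow> \<rho> x > -\<eta> \<Longrightarrow> \<bar>H x \<bullet> grad \<rho> x\<bar> \<le> C * \<bar>\<rho> x\<bar>"
proof -
  let ?K = "closure \<Omega>" and ?N = "grad \<rho>"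
  obtain DN where DN: "\<And>x. (?N has_derivative DN x) (at x)" and DNcont: "\<And>j. continuous_on UNIV (\<lambda>x. DN x (axis j 1))"
    using Ck_2_grad[OF Ck_2_rho] by metis
  have Hcont: "continuous_on ?K H"
    using Hder by (meson has_derivative_continuous continuous_on_eq_continuous_within)
  obtain MH where MH: "MH \<ge> 0" "\<And>x. x \<in> ?K \<Longrightarrow> norm (H x) \<le> MH"
    using compact_continuous_norm_bound[OF Hcont compact_closure_Omega] by blast
  obtain MN where MN: "MN \<ge> 0" "\<And>x. x \<in> ?K \<Longrightarrow> norm (?N x) \<le> MN"
    using compact_continuous_norm_bound[OF continuous_on_subset[OF continuous_on_grad_rho] compact_closure_Omega]
    by blast
  obtain MD where MD: "MD \<ge> 0" "\<And>x h. x \<in> ?K \<Longrightarrow> norm (DH x h) \<le> MD * norm h"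
    using compact_linear_family_norm_bound[OF has_derivative_linear[OF Hder] DHcont compact_closure_Omega]
    by blast
  obtain MDN where MDN: "MDN \<ge> 0" "\<And>x h. x \<in> ?K \<Longrightarrow> norm (DN x h) \<le> MDN * norm h"
    using compact_linear_family_norm_bound[OF has_derivative_linear[OF DN]
        continuous_on_subset[OF DNcont] compact_closure_Omega] by blast
  define Dg where "Dg x h = H x \<bullet> DN x h + DH x h \<bullet> ?N x" for x h
  have gder: "((\<lambda>x. H x \<bullet> ?N x) has_derivative Dg x) (at x within ?K)" if "x \<in> ?K" for x
    unfolding Dg_def[abs_def] by (rule has_derivative_inner[OF Hder[OF that] has_derivative_at_withinI[OF DN]])
  have gb: "\<bar>Dg x h\<bar> \<le> (MH * MDN + MD * MN) * norm h" if x: "x \<in> ?K" for x h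
  proof -
    have "\<bar>H x \<bullet> DN x h\<bar> \<le> norm (H x) * norm (DN x h)" by (rule Cauchy_Schwarz_ineq2)
    also have "\<dots> \<le> MH * (MDN * norm h)" using MH MDN x by (intro mult_mono) auto
    finally have 1: "\<bar>H x \<bullet> DN x h\<bar> \<le> MH * (MDN * norm h)" .
    have "\<bar>DH x h \<bullet> ?N x\<bar> \<le> norm (DH x h) * norm (?N x)" by (rule Cauchy_Schwarz_ineq2)
    also have "\<dots> \<le> (MD * norm h) * MN" using MD MN x by (intro mult_mono) auto
    finally have 2: "\<bar>DH x h \<bullet> ?N x\<bar> \<le> (MD * norm h) * MN" .
    have "\<bar>Dg x h\<bar> \<le> \<bar>H x \<bullet> DN x h\<bar> + \<bar>DH x h \<bullet> ?N x\<bar>" by (simp add: Dg_def abs_triangle_ineq)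
    also have "\<dots> \<le> (MH * MDN + MD * MN) * norm h" using 1 2 by (simp add: algebra_simps)
    finally show ?thesis .
  qed
  have L: "MH * MDN + MD * MN \<ge> 0" using MH MDN MD MN by simp
  obtain C \<eta> where "C \<ge> 0" "\<eta> > 0" "\<And>x. x \<in> \<Omega> \<Longrightarrow> \<rho> x > -\<eta> \<Longrightarrow> \<bar>H x \<bullet> ?N x\<bar> \<le> C * \<bar>\<rho> x\<bar>"
    using abs_le_rho_near_frontier[OF gder gb L tangent] by blast
  then show ?thesis by (rule that)
qed

text \<open>The divergence theorem $\int_\Omega \nabla\cdot H = \int_{\partial\Omega} H\cdot\nu = 0$ for a
  $C^1$ field tangent to the boundary, proved without surface measure: integrate the divergence of
  $\mathrm{cutoff}(\rho/\varepsilon) H$ and let $\varepsilon \to 0$; the boundary-layer term stays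
  bounded because $H\cdot\nabla\rho = O(|\rho|)$.\<close>

lemma has_integral_divergence_tangent_field:
  fixes H :: "real^'n \<Rightarrow> real^'n" and DH :: "real^'n \<Rightarrow> real^'n \<Rightarrow> real^'n"
  assumes Hder: "\<And>x. x \<in> closure \<Omega> \<Longrightarrow> (H has_derivative DH x) (at x within closure \<Omega>)"
    and DHcont: "\<And>j. continuous_on (closure \<Omega>) (\<lambda>x. DH x (axis j 1))"
    and tangent: "\<And>y. y \<in> frontier \<Omega> \<Longrightarrow> H y \<bullet> grad \<rho> y = 0"
  shows "((\<lambda>x. \<Sum>i\<in>UNIV. DH x (axis i 1) $ i) has_integral 0) \<Omega>"
proof -
  define divH where "divH x = (\<Sum>i\<in>UNIV. DH x (axis i 1) $ i)" for x
  define g where "g x = H x \<bullet> grad \<rho> x" for x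
  have "continuous_on (closure \<Omega>) divH" unfolding divH_def by (intro continuous_intros DHcont)
  then obtain Mdiv where Mdiv: "\<And>x. x \<in> closure \<Omega> \<Longrightarrow> norm (divH x) \<le> Mdiv"
    using compact_continuous_norm_bound[OF _ compact_closure_Omega] by blast
  obtain C \<eta> where C: "C \<ge> 0" and \<eta>: "\<eta> > 0" and Cb: "\<And>x. x \<in> \<Omega> \<Longrightarrow> \<rho> x > -\<eta> \<Longrightarrow> \<bar>g x\<bar> \<le> C * \<bar>\<rho> x\<bar>"
    using inner_grad_rho_le_near_frontier[OF Hder DHcont tangent] unfolding g_def by blast
  define \<epsilon> where "\<epsilon> k = \<eta>/2 / real (Suc k)" for k
  have \<epsilon>: "\<epsilon> k > 0" "\<epsilon> k \<le> \<eta>/2" for k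
    using \<eta> by (auto simp: \<epsilon>_def divide_le_eq)
  have \<epsilon>lim: "\<epsilon> \<longlonglongrightarrow> 0"
    unfolding \<epsilon>_def using lim_const_over_n[of "\<eta>/2"] LIMSEQ_Suc by blast
  define f where "f k x = cutoff (\<rho> x / \<epsilon> k) * divH x + cutoff_deriv (\<rho> x / \<epsilon> k) / \<epsilon> k * g x" for k x
  have fI: "(f k has_integral 0) \<Omega>" for k
    using has_integral_cutoff_divergence[OF Hder DHcont \<epsilon>(1)] by (simp add: f_def[abs_def] divH_def g_def)
  have bound: "norm (f k x) \<le> Mdiv + 4 * C" if x: "x \<in> \<Omega>" for k x
  proof -
    have "\<bar>cutoff (\<rho> x / \<epsilon> k) * divH x\<bar> \<le> 1 * Mdiv"
      unfolding abs_mult using cutoff_bounds[of "\<rho> x / \<epsilon> k"] Mdiv[of x] x closure_subset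
      by (intro mult_mono) auto
    moreover have "\<bar>cutoff_deriv (\<rho> x / \<epsilon> k) / \<epsilon> k * g x\<bar> \<le> 4 * C"
      using \<epsilon>[of k] x Omega_eq C Cb[OF x] by (intro abs_cutoff_deriv_layer_le) auto
    ultimately show ?thesis unfolding f_def real_norm_def by linarith
  qed
  have lim: "(\<lambda>k. f k x) \<longlonglongrightarrow> divH x" if x: "x \<in> \<Omega>" for x
  proof (rule tendsto_eventually)
    have "-\<rho> x / 2 > 0" using x Omega_eq by simp
    from order_tendstoD(2)[OF \<epsilon>lim this]
    show "\<forall>\<^sub>F k in sequentially. f k x = divH x"
    proof (rule eventually_mono)
      fix k assume "\<epsilon> k < -\<rho> x / 2"
      then have "\<rho> x / \<epsilon> k < -2" using \<epsilon>(1)[of k] by (simp add: field_simps)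
      then show "f k x = divH x" by (simp add: f_def cutoff_eq_1 cutoff_deriv_eq_0)
    qed
  qed
  have fint: "f k integrable_on \<Omega>" for k using fI by blast
  have hint: "(\<lambda>_. Mdiv + 4 * C) integrable_on \<Omega>" by (rule integrable_on_const[OF lmeasurable_Omega])
  have DC: "divH integrable_on \<Omega>" "(\<lambda>k. integral \<Omega> (f k)) \<longlonglongrightarrow> integral \<Omega> divH"
    using dominated_convergence[OF fint hint bound lim] by auto
  have "(\<lambda>k. integral \<Omega> (f k)) = (\<lambda>_. 0)" using fI by (auto simp: integral_unique)
  then have "integral \<Omega> divH = 0" using LIMSEQ_unique[OF DC(2)] by simp
  with DC(1) show ?thesis unfolding divH_def[symmetric] by (metis integrable_integral)
qed

end

section \<open>Total mass of the chemotaxis system\<close>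

lemma sensitivity_has_real_derivative:
  fixes \<alpha> s :: real
  assumes "s > -1"
  shows "((\<lambda>s. s / (1 + s) powr \<alpha>) has_real_derivative (1 - \<alpha> * s / (1 + s)) / (1 + s) powr \<alpha>) (at s)"
proof -
  have p: "1 + s > 0" using assms by simp
  have "((\<lambda>s. 1 + s) has_real_derivative 1) (at s)" by (auto intro!: derivative_eq_intros)
  from DERIV_powr[OF this p, of "\<lambda>_. \<alpha>" 0]
  have "((\<lambda>s. (1 + s) powr \<alpha>) has_real_derivative (1 + s) powr \<alpha> * (0 * ln (1 + s) + 1 * \<alpha> / (1 + s))) (at s)"
    by simp
  moreover have "(1 + s) powr \<alpha> \<noteq> 0" using p by simp
  ultimately have "((\<lambda>s. s / (1 + s) powr \<alpha>) has_real_derivative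
      (1 * (1 + s) powr \<alpha> - s * ((1 + s) powr \<alpha> * (0 * ln (1 + s) + 1 * \<alpha> / (1 + s))))
      / ((1 + s) powr \<alpha> * (1 + s) powr \<alpha>)) (at s)"
    by (rule DERIV_divide[OF DERIV_ident])
  moreover have "(1 * P - s * (P * (0 * L + 1 * \<alpha> / (1 + s)))) / (P * P) = (1 - \<alpha> * s / (1 + s)) / P"
    if "P \<noteq> 0" for P L :: real
  proof -
    have "1 * P - s * (P * (0 * L + 1 * \<alpha> / (1 + s))) = P * (1 - \<alpha> * s / (1 + s))"
      by (simp add: algebra_simps)
    then show ?thesis using that by simp
  qed
  ultimately show ?thesis using p by simp
qed

definition has_gradient_hessian_on ::
    "(real^'n) set \<Rightarrow> (real^'n \<Rightarrow> real) \<Rightarrow> (real^'n \<Rightarrow> real^'n) \<Rightarrow> (real^'n \<Rightarrow> real^'n^'n) \<Rightarrow> bool" where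
  "has_gradient_hessian_on K f g H \<longleftrightarrow>
     (\<forall>x\<in>K. (f has_derivative (\<lambda>h. g x \<bullet> h)) (at x within K) \<and>
             (g has_derivative (\<lambda>h. H x *v h)) (at x within K)) \<and>
     continuous_on K g \<and> continuous_on K H"

lemma C21_space_slices:
  assumes "C21_space \<Omega> T u"
  obtains ut gu hu where
    "\<And>x t. x \<in> closure \<Omega> \<Longrightarrow> t \<in> time_open T \<Longrightarrow> ((\<lambda>s. u x s) has_real_derivative ut x t) (at t)"
    "continuous_on (closure \<Omega> \<times> time_open T) (\<lambda>(x,t). ut x t)"
    "\<And>t. t \<in> time_open T \<Longrightarrow> has_gradient_hessian_on (closure \<Omega>) (\<lambda>y. u y t) (\<lambda>y. gu y t) (\<lambda>y. hu y t)"
proof -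
  obtain ut gu hu where d: "\<forall>x\<in>closure \<Omega>. \<forall>t\<in>time_open T.
          ((\<lambda>s. u x s) has_real_derivative ut x t) (at t) \<and>
          ((\<lambda>y. u y t) has_derivative (\<lambda>h. gu x t \<bullet> h)) (at x within closure \<Omega>) \<and>
          ((\<lambda>y. gu y t) has_derivative (\<lambda>h. hu x t *v h)) (at x within closure \<Omega>)"
    and utc: "continuous_on (closure \<Omega> \<times> time_open T) (\<lambda>(x,t). ut x t)"
    and guc: "continuous_on (closure \<Omega> \<times> time_open T) (\<lambda>(x,t). gu x t)"
    and huc: "continuous_on (closure \<Omega> \<times> time_open T) (\<lambda>(x,t). hu x t)"
    using assms unfolding C21_space_def by blast
  show ?thesis
  proof (rule that[of ut gu hu])
    show "((\<lambda>s. u x s) has_real_derivative ut x t) (at t)" if "x \<in> closure \<Omega>" "t \<in> time_open T" for x t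
      using d that by blast
    show "has_gradient_hessian_on (closure \<Omega>) (\<lambda>y. u y t) (\<lambda>y. gu y t) (\<lambda>y. hu y t)"
      if "t \<in> time_open T" for t
      using d that continuous_on_slice[OF guc that] continuous_on_slice[OF huc that]
      by (simp add: has_gradient_hessian_on_def)
  qed (rule utc)
qed

lemma has_gradient_hessian_on_interior:
  assumes "has_gradient_hessian_on K f g H" and "x \<in> interior K"
  shows "grad f x = g x" and "lapl f x = (\<Sum>i\<in>UNIV. (H x *v axis i 1) $ i)"
proof -
  have at: "at y within K = at y" if "y \<in> interior K" for y
    using that by (rule at_within_interior)
  have der: "(f has_derivative (\<lambda>h. g y \<bullet> h)) (at y) \<and> (g has_derivative (\<lambda>h. H y *v h)) (at y)"
    if "y \<in> interior K" for y
  proof -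
    have "y \<in> K" using that interior_subset by blast
    then show ?thesis
      using assms(1) unfolding has_gradient_hessian_on_def at[OF that, symmetric] by blast
  qed
  have gr: "grad f y = g y" if "y \<in> interior K" for y
    using der[OF that] by (intro grad_eqI) simp
  then show "grad f x = g x" using assms(2) .
  have "(g has_derivative (\<lambda>h. H x *v h)) (at x)" using der[OF assms(2)] by simp
  then have "(grad f has_derivative (\<lambda>h. H x *v h)) (at x)"
    by (rule has_derivative_transform_within_open[OF _ open_interior assms(2)]) (use gr in simp)
  then show "lapl f x = (\<Sum>i\<in>UNIV. (H x *v axis i 1) $ i)"
    unfolding lapl_def by (rule diverg_eqI)
qed

lemma continuous_on_matrix_vector_mult:
  fixes M :: "'a::topological_space \<Rightarrow> real^'n^'m"
  assumes "continuous_on S M"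
  shows "continuous_on S (\<lambda>x. M x *v c)"
  unfolding matrix_vector_mult_def by (intro continuous_intros continuous_on_component assms)

lemma has_derivative_sensitivity_scaleR:
  fixes \<alpha> :: real and U :: "'a::real_normed_vector \<Rightarrow> real" and W :: "'a \<Rightarrow> 'b::real_normed_vector"
  assumes dU: "(U has_derivative DU) (at x within S)" and dW: "(W has_derivative DW) (at x within S)"
    and nonneg: "U x \<ge> 0"
  shows "((\<lambda>y. (U y / (1 + U y) powr \<alpha>) *\<^sub>R W y) has_derivative
     (\<lambda>h. (U x / (1 + U x) powr \<alpha>) *\<^sub>R DW h
       + ((1 - \<alpha> * U x / (1 + U x)) / (1 + U x) powr \<alpha> * DU h) *\<^sub>R W x)) (at x within S)"
proof -
  have "((\<lambda>t. t / (1 + t) powr \<alpha>) has_derivative (*) ((1 - \<alpha> * U x / (1 + U x)) / (1 + U x) powr \<alpha>)) (at (U x))"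
    using sensitivity_has_real_derivative[of "U x" \<alpha>] nonneg by (simp add: has_field_derivative_def)
  from has_derivative_scaleR[OF has_derivative_compose[OF dU this] dW] show ?thesis by simp
qed

context domain_defining_fun
begin

text \<open>The integrand is the divergence of the flux $\nabla u + \nabla v - \frac{u}{(1+u)^\alpha}\nabla v$,
  which is tangent to the boundary by the Neumann conditions.\<close>

lemma has_integral_total_flux_divergence:
  fixes \<alpha> :: real
  assumes U: "has_gradient_hessian_on (closure \<Omega>) U gU HU" and V: "has_gradient_hessian_on (closure \<Omega>) V gV HV"
    and U_nonneg: "\<And>x. x \<in> closure \<Omega> \<Longrightarrow> U x \<ge> 0"
    and bcU: "\<And>y. y \<in> frontier \<Omega> \<Longrightarrow> neumann_zero_at \<Omega> U y"
    and bcV: "\<And>y. y \<in> frontier \<Omega> \<Longrightarrow> neumann_zero_at \<Omega> V y"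
  shows "((\<lambda>x. lapl U x + lapl V x - diverg (\<lambda>y. (U y / (1 + U y) powr \<alpha>) *\<^sub>R grad V y) x) has_integral 0) \<Omega>"
proof -
  let ?K = "closure \<Omega>"
  define s where "s y = U y / (1 + U y) powr \<alpha>" for y
  define ds where "ds y = (1 - \<alpha> * U y / (1 + U y)) / (1 + U y) powr \<alpha>" for y
  define H where "H y = gU y + gV y - s y *\<^sub>R gV y" for y
  define DH where "DH x h = HU x *v h + HV x *v h - (s x *\<^sub>R (HV x *v h) + (ds x * (gU x \<bullet> h)) *\<^sub>R gV x)"
    for x h
  have dU: "(U has_derivative (\<lambda>h. gU x \<bullet> h)) (at x within ?K)"
    and dgU: "(gU has_derivative (\<lambda>h. HU x *v h)) (at x within ?K)"
    and dV: "(V has_derivative (\<lambda>h. gV x \<bullet> h)) (at x within ?K)"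
    and dgV: "(gV has_derivative (\<lambda>h. HV x *v h)) (at x within ?K)" if "x \<in> ?K" for x
    using U V that by (simp_all add: has_gradient_hessian_on_def)
  have dsgV: "((\<lambda>y. s y *\<^sub>R gV y) has_derivative (\<lambda>h. s x *\<^sub>R (HV x *v h) + (ds x * (gU x \<bullet> h)) *\<^sub>R gV x))
      (at x within ?K)" if x: "x \<in> ?K" for x
    unfolding s_def ds_def by (rule has_derivative_sensitivity_scaleR[OF dU[OF x] dgV[OF x] U_nonneg[OF x]])
  have Hder: "(H has_derivative DH x) (at x within ?K)" if "x \<in> ?K" for x
    unfolding H_def[abs_def] DH_def[abs_def]
    by (intro has_derivative_diff has_derivative_add dgU dgV dsgV that)
  have Ucont: "continuous_on ?K U"
    using dU by (meson has_derivative_continuous continuous_on_eq_continuous_within)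
  have pos: "1 + U x > 0" and nz: "1 + U x \<noteq> 0" if "x \<in> ?K" for x
    using U_nonneg[OF that] by simp_all
  have DHcont: "continuous_on ?K (\<lambda>x. DH x (axis j 1))" for j
    unfolding DH_def s_def ds_def using U V pos
    by (intro continuous_intros continuous_on_matrix_vector_mult Ucont)
       (auto simp: has_gradient_hessian_on_def nz)
  have "H y \<bullet> grad \<rho> y = 0" if y: "y \<in> frontier \<Omega>" for y
  proof -
    have yK: "y \<in> ?K" using y by (simp add: frontier_def)
    have "gU y \<bullet> grad \<rho> y = 0" "gV y \<bullet> grad \<rho> y = 0"
      using neumann_zero_at_imp_inner_grad_zero[OF y dU[OF yK] bcU[OF y]]
        neumann_zero_at_imp_inner_grad_zero[OF y dV[OF yK] bcV[OF y]] by simp_all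
    then show ?thesis by (simp add: H_def inner_diff_left inner_add_left)
  qed
  from has_integral_divergence_tangent_field[OF Hder DHcont this]
  have "((\<lambda>x. \<Sum>i\<in>UNIV. DH x (axis i 1) $ i) has_integral 0) \<Omega>" .
  moreover have "(\<Sum>i\<in>UNIV. DH x (axis i 1) $ i) =
      lapl U x + lapl V x - diverg (\<lambda>y. (U y / (1 + U y) powr \<alpha>) *\<^sub>R grad V y) x" if x: "x \<in> \<Omega>" for x
  proof -
    have int: "y \<in> interior ?K" if "y \<in> \<Omega>" for y
      using that interior_maximal[OF closure_subset open_Omega] by blast
    have xK: "x \<in> ?K" using x closure_subset by blast
    have "((\<lambda>y. s y *\<^sub>R gV y) has_derivative (\<lambda>h. s x *\<^sub>R (HV x *v h) + (ds x * (gU x \<bullet> h)) *\<^sub>R gV x)) (at x)"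
      using dsgV[OF xK] at_within_closure_eq_at[OF x] by simp
    then have "((\<lambda>y. (U y / (1 + U y) powr \<alpha>) *\<^sub>R grad V y) has_derivative
        (\<lambda>h. s x *\<^sub>R (HV x *v h) + (ds x * (gU x \<bullet> h)) *\<^sub>R gV x)) (at x)"
      by (rule has_derivative_transform_within_open[OF _ open_Omega x])
         (simp add: s_def has_gradient_hessian_on_interior(1)[OF V int])
    then show ?thesis
      using has_gradient_hessian_on_interior(2)[OF U int[OF x]] has_gradient_hessian_on_interior(2)[OF V int[OF x]]
      by (simp add: diverg_eqI DH_def sum.distrib sum_subtractf)
  qed
  ultimately show ?thesis by (rule has_integral_eq[rotated]) simp
qed

end

lemma time_open_bounded_above:
  assumes "t \<in> time_open T"
  obtains b where "t \<in> {0<..<b}" "{0<..<b} \<subseteq> time_open T"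
proof -
  have "ereal t < T" using assms by (simp add: time_open_def)
  then obtain b where b: "ereal t < ereal b" "ereal b < T"
    using ereal_dense2 by blast
  have "t \<in> {0<..<b}" using assms b by (simp add: time_open_def)
  moreover have "{0<..<b} \<subseteq> time_open T"
    using b by (auto simp: time_open_def intro: order.strict_trans[of _ "ereal b"])
  ultimately show ?thesis by (rule that)
qed

lemma integrable_on_slice:
  fixes u :: "real^'n \<Rightarrow> real \<Rightarrow> real"
  assumes "bounded \<Omega>" "open \<Omega>" "C0_space \<Omega> T u" and "t \<in> time_closed0 T"
  shows "(\<lambda>x. u x t) integrable_on \<Omega>"
proof (rule integrable_on_continuous_closure[OF assms(1,2)])
  show "continuous_on (closure \<Omega>) (\<lambda>x. u x t)"
    using continuous_on_slice[OF assms(3)[unfolded C0_space_def] assms(4)] .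
qed

lemma has_real_derivative_integral_time:
  fixes u :: "real^'n \<Rightarrow> real \<Rightarrow> real"
  assumes "bounded \<Omega>" "open \<Omega>" "C0_space \<Omega> T u" "C21_space \<Omega> T u" and t: "t \<in> time_open T"
  shows "(\<lambda>x. deriv (\<lambda>s. u x s) t) integrable_on \<Omega>"
    and "((\<lambda>s. integral \<Omega> (\<lambda>x. u x s)) has_real_derivative integral \<Omega> (\<lambda>x. deriv (\<lambda>s. u x s) t)) (at t)"
proof -
  obtain ut where ut: "\<And>x t. x \<in> closure \<Omega> \<Longrightarrow> t \<in> time_open T \<Longrightarrow> ((\<lambda>s. u x s) has_real_derivative ut x t) (at t)"
    and utc: "continuous_on (closure \<Omega> \<times> time_open T) (\<lambda>(x,t). ut x t)"
    using C21_space_slices[OF assms(4)] by metis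
  obtain b where b: "t \<in> {0<..<b}" "{0<..<b} \<subseteq> time_open T"
    using time_open_bounded_above[OF t] by blast
  have uc: "continuous_on (closure \<Omega> \<times> time_closed0 T) (\<lambda>(x,t). u x t)"
    using assms(3) by (simp add: C0_space_def)
  have "((\<lambda>s. integral \<Omega> (\<lambda>x. u x s)) has_real_derivative integral \<Omega> (\<lambda>x. ut x t)) (at t)"
  proof (rule has_real_derivative_integral_param[OF assms(1,2) _ _ _ b(1)])
    show "((\<lambda>s. u x s) has_real_derivative ut x s) (at s)" if "x \<in> closure \<Omega>" "s \<in> {0<..<b}" for x s
      using ut that b(2) by blast
    show "continuous_on (closure \<Omega> \<times> {0<..<b}) (\<lambda>(x, s). ut x s)"
      by (rule continuous_on_subset[OF utc]) (use b(2) in auto)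
    show "continuous_on (closure \<Omega>) (\<lambda>x. u x s)" if "s \<in> {0<..<b}" for s
      by (rule continuous_on_slice[OF uc]) (use that b(2) in \<open>auto simp: time_open_def time_closed0_def\<close>)
  qed
  moreover have eq: "ut x t = deriv (\<lambda>s. u x s) t" if "x \<in> \<Omega>" for x
    using ut[OF _ t] that closure_subset by (intro DERIV_imp_deriv[symmetric]) auto
  moreover have "integral \<Omega> (\<lambda>x. ut x t) = integral \<Omega> (\<lambda>x. deriv (\<lambda>s. u x s) t)"
    by (rule integral_cong) (rule eq)
  ultimately show "((\<lambda>s. integral \<Omega> (\<lambda>x. u x s)) has_real_derivative integral \<Omega> (\<lambda>x. deriv (\<lambda>s. u x s) t)) (at t)"
    by simp
  have "(\<lambda>x. ut x t) integrable_on \<Omega>"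
    by (rule integrable_on_continuous_closure[OF assms(1,2) continuous_on_slice[OF utc t]])
  then show "(\<lambda>x. deriv (\<lambda>s. u x s) t) integrable_on \<Omega>"
    by (rule integrable_eq) (rule eq)
qed

lemma continuous_on_integral_time:
  fixes u :: "real^'n \<Rightarrow> real \<Rightarrow> real"
  assumes "bounded \<Omega>" "open \<Omega>" "C0_space \<Omega> T u" and t: "t \<in> time_open T"
  shows "continuous_on {0..t} (\<lambda>s. integral \<Omega> (\<lambda>x. u x s))"
proof (rule continuous_on_integral_param[OF assms(1,2) compact_Icc])
  have "{0..t} \<subseteq> time_closed0 T"
    using t by (auto simp: time_open_def time_closed0_def intro: order.strict_trans1[of _ "ereal t"])
  then have "closure \<Omega> \<times> {0..t} \<subseteq> closure \<Omega> \<times> time_closed0 T" by auto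
  then show "continuous_on (closure \<Omega> \<times> {0..t}) (\<lambda>(x, s). u x s)"
    by (rule continuous_on_subset[OF assms(3)[unfolded C0_space_def]])
qed

lemma linear_relaxation_ode_solution:
  fixes Y :: "real \<Rightarrow> real"
  assumes t: "t > 0" and cont: "continuous_on {0..t} Y"
    and der: "\<And>s. 0 < s \<Longrightarrow> s < t \<Longrightarrow> (Y has_real_derivative c - Y s) (at s)"
  shows "Y t = exp (- t) * Y 0 + c * (1 - exp (- t))"
proof -
  define Z where "Z s = (Y s - c) * exp s" for s
  have "Z t = Z 0"
  proof (rule DERIV_isconst_end[OF t])
    show "continuous_on {0..t} Z" unfolding Z_def by (intro continuous_intros cont)
    show "(Z has_real_derivative 0) (at s)" if "0 < s" "s < t" for s
      unfolding Z_def[abs_def] using der[OF that]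
      by (auto intro!: derivative_eq_intros simp: algebra_simps)
  qed
  then have "(Y t - c) * exp t = Y 0 - c" by (simp add: Z_def)
  then have "Y t - c = exp (- t) * (Y 0 - c)" by (simp add: exp_minus field_simps)
  then show ?thesis by (simp add: algebra_simps)
qed

locale chemotaxis_solution = domain_defining_fun \<Omega> \<rho>
  for \<Omega> :: "(real^'n) set" and \<rho> +
  fixes \<alpha> \<kappa> :: real and T :: ereal and u v w :: "real^'n \<Rightarrow> real \<Rightarrow> real"
  assumes u_nonneg: "\<forall>x\<in>closure \<Omega>. \<forall>t\<in>time_closed0 T. u x t \<ge> 0"
    and u_reg: "C0_space \<Omega> T u" "C21_space \<Omega> T u"
    and v_reg: "C0_space \<Omega> T v" "C21_space \<Omega> T v"
    and u_eq: "\<forall>x\<in>\<Omega>. \<forall>t\<in>time_open T.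
       deriv (\<lambda>s. u x s) t =
         lapl (\<lambda>y. u y t) x
         - diverg (\<lambda>y. (u y t / (1 + u y t) powr \<alpha>) *\<^sub>R grad (\<lambda>z. v z t) y) x
         - u x t * w x t + \<kappa> - u x t"
    and v_eq: "\<forall>x\<in>\<Omega>. \<forall>t\<in>time_open T.
       deriv (\<lambda>s. v x s) t = lapl (\<lambda>y. v y t) x + u x t * w x t - v x t"
    and bc_u: "\<forall>x\<in>frontier \<Omega>. \<forall>t\<in>time_open T. neumann_zero_at \<Omega> (\<lambda>y. u y t) x"
    and bc_v: "\<forall>x\<in>frontier \<Omega>. \<forall>t\<in>time_open T. neumann_zero_at \<Omega> (\<lambda>y. v y t) x"
begin

definition total_mass :: "real \<Rightarrow> real" where
  "total_mass t = integral \<Omega> (\<lambda>x. u x t) + integral \<Omega> (\<lambda>x. v x t)"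

lemma total_mass_has_derivative:
  assumes t: "t \<in> time_open T"
  shows "(total_mass has_real_derivative \<kappa> * measure lebesgue \<Omega> - total_mass t) (at t)"
proof -
  have tc: "t \<in> time_closed0 T" using t by (simp add: time_open_def time_closed0_def)
  obtain gu hu where gu: "has_gradient_hessian_on (closure \<Omega>) (\<lambda>y. u y t) (\<lambda>y. gu y t) (\<lambda>y. hu y t)"
    using C21_space_slices[OF u_reg(2)] t by metis
  obtain gv hv where gv: "has_gradient_hessian_on (closure \<Omega>) (\<lambda>y. v y t) (\<lambda>y. gv y t) (\<lambda>y. hv y t)"
    using C21_space_slices[OF v_reg(2)] t by metis
  note du = has_real_derivative_integral_time[OF bounded_Omega open_Omega u_reg t]
  note dv = has_real_derivative_integral_time[OF bounded_Omega open_Omega v_reg t]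
  note iu = integrable_on_slice[OF bounded_Omega open_Omega u_reg(1) tc]
  note iv = integrable_on_slice[OF bounded_Omega open_Omega v_reg(1) tc]
  let ?F = "\<lambda>x. lapl (\<lambda>y. u y t) x + lapl (\<lambda>y. v y t) x
      - diverg (\<lambda>y. (u y t / (1 + u y t) powr \<alpha>) *\<^sub>R grad (\<lambda>z. v z t) y) x"
  have "(?F has_integral 0) \<Omega>"
    by (rule has_integral_total_flux_divergence[OF gu gv]) (use u_nonneg bc_u bc_v t tc in auto)
  moreover have "((\<lambda>_. \<kappa>) has_integral \<kappa> * measure lebesgue \<Omega>) \<Omega>"
  proof -
    have "integral \<Omega> (\<lambda>_. \<kappa>) = \<kappa> * measure lebesgue \<Omega>"
      using lmeasure_integral[OF lmeasurable_Omega] integral_mult_right[of \<Omega> \<kappa> "\<lambda>_. 1::real"] by simp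
    then show ?thesis using integrable_integral[OF integrable_on_const[OF lmeasurable_Omega, of \<kappa>]] by simp
  qed
  ultimately have "((\<lambda>x. ?F x + \<kappa> - u x t - v x t) has_integral
      (0 + \<kappa> * measure lebesgue \<Omega> - integral \<Omega> (\<lambda>x. u x t) - integral \<Omega> (\<lambda>x. v x t))) \<Omega>"
    by (intro has_integral_diff has_integral_add integrable_integral iu iv)
  then have "((\<lambda>x. deriv (\<lambda>s. u x s) t + deriv (\<lambda>s. v x s) t) has_integral
      (0 + \<kappa> * measure lebesgue \<Omega> - integral \<Omega> (\<lambda>x. u x t) - integral \<Omega> (\<lambda>x. v x t))) \<Omega>"
    by (rule has_integral_eq[rotated]) (use u_eq v_eq t in simp)
  then have "integral \<Omega> (\<lambda>x. deriv (\<lambda>s. u x s) t) + integral \<Omega> (\<lambda>x. deriv (\<lambda>s. v x s) t)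
      = \<kappa> * measure lebesgue \<Omega> - total_mass t"
    using integral_add[OF du(1) dv(1)] by (simp add: integral_unique total_mass_def)
  with DERIV_add[OF du(2) dv(2)] show ?thesis
    by (simp add: total_mass_def[abs_def])
qed

lemma total_mass_eq:
  assumes t: "t \<in> time_open T"
  shows "total_mass t = exp (- t) * total_mass 0 + \<kappa> * measure lebesgue \<Omega> * (1 - exp (- t))"
proof (rule linear_relaxation_ode_solution)
  show "t > 0" using t by (simp add: time_open_def)
  show "continuous_on {0..t} total_mass"
    unfolding total_mass_def[abs_def]
    by (intro continuous_intros continuous_on_integral_time[OF bounded_Omega open_Omega _ t] u_reg v_reg)
  show "(total_mass has_real_derivative \<kappa> * measure lebesgue \<Omega> - total_mass s) (at s)"
    if "0 < s" "s < t" for s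
  proof (rule total_mass_has_derivative)
    have "ereal s < T" using that t by (auto simp: time_open_def intro: order.strict_trans[of _ "ereal t"])
    then show "s \<in> time_open T" using that by (simp add: time_open_def)
  qed
qed

end

theorem lemma2p2:
  fixes \<Omega> :: "(real^'n) set"
    and \<alpha> \<kappa> :: real
    and T :: ereal
    and u v w :: "real^'n \<Rightarrow> real \<Rightarrow> real"
  assumes dom: "bounded_smooth_domain \<Omega>"
    and alpha: "\<alpha> \<ge> 0" and kappa: "\<kappa> \<ge> 0" and T: "T > 0"
    and u_nonneg: "\<forall>x\<in>closure \<Omega>. \<forall>t\<in>time_closed0 T. u x t \<ge> 0"
    and v_nonneg: "\<forall>x\<in>closure \<Omega>. \<forall>t\<in>time_closed0 T. v x t \<ge> 0"
    and u_reg: "C0_space \<Omega> T u" "C21_space \<Omega> T u"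
    and v_reg: "C0_space \<Omega> T v" "C21_space \<Omega> T v"
    and u_eq: "\<forall>x\<in>\<Omega>. \<forall>t\<in>time_open T.
       deriv (\<lambda>s. u x s) t =
         lapl (\<lambda>y. u y t) x
         - diverg (\<lambda>y. (u y t / (1 + u y t) powr \<alpha>) *\<^sub>R grad (\<lambda>z. v z t) y) x
         - u x t * w x t + \<kappa> - u x t"
    and v_eq: "\<forall>x\<in>\<Omega>. \<forall>t\<in>time_open T.
       deriv (\<lambda>s. v x s) t = lapl (\<lambda>y. v y t) x + u x t * w x t - v x t"
    and bc: "\<forall>x\<in>frontier \<Omega>. \<forall>t\<in>time_open T.
       neumann_zero_at \<Omega> (\<lambda>y. u y t) x \<and> neumann_zero_at \<Omega> (\<lambda>y. v y t) x \<and>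
       neumann_zero_at \<Omega> (\<lambda>y. w y t) x"
  shows "\<forall>t\<in>time_open T.
     integral \<Omega> (\<lambda>x. u x t) + integral \<Omega> (\<lambda>x. v x t) =
       exp (- t) * (integral \<Omega> (\<lambda>x. u x 0) + integral \<Omega> (\<lambda>x. v x 0))
       + \<kappa> * measure lebesgue \<Omega> * (1 - exp (- t))"
proof -
  obtain \<rho> where \<rho>: "defining_fun \<Omega> \<rho>" using dom by (auto simp: bounded_smooth_domain_def)
  interpret chemotaxis_solution \<Omega> \<rho> \<alpha> \<kappa> T u v w
    using dom \<rho> u_nonneg u_reg v_reg u_eq v_eq bc by unfold_locales auto
  show ?thesis using total_mass_eq by (simp add: total_mass_def)
qed

end
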